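(* Let $n\ge2$, $f\in\mathcal{E}$, and suppose $Q(f)=0$. Then for every integer $k\ge1$ there exists a smooth function $\widetilde f$ on $\mathbb{C}^{n+1}\setminus\{0\}$, homogeneous of degree $(0,0)$, with $\widetilde f|_{\mathcal{N}}=f$ and $\Delta\widetilde f=O(L^k)$.
   Context: On $\mathbb{C}^{n+1}$ with coordinates $\zeta=(\zeta_0,\dots,\zeta_n)$ put $L(\zeta)=|\zeta_0|^2-\sum_{j=1}^n|\zeta_j|^2$, $\mathcal{N}=\{\zeta\ne0:L(\zeta)=0\}$, $\Delta=\partial_{\zeta_0}\partial_{\bar\zeta_0}-\sum_{j=1}^n\partial_{\zeta_j}\partial_{\bar\zeta_j}$. Homogeneous of degree $(p,q)$ means $\widetilde f(\lambda\zeta)=\lambda^p\bar\lambda^q\widetilde f(\zeta)$. $\mathcal{E}=\{f\in C^\infty(\mathcal{N},\mathbb{R}):f(\lambda\zeta)=f(\zeta)\}$. $u=O(L^k)$ means $u=L^kh$ with $h$ smooth. For $f\in\mathcal{E}$, $Q(f)=(\Delta^n\widetilde f)|_{\mathcal{N}}$ where $\widetilde f$ is any smooth homogeneous degree $(0,0)$ extension of $f$ (this is independent of the extension). *)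

theory Defs
  imports "HOL-Analysis.Analysis"
begin

text \<open>Coordinates: \<open>\<complex>^{n+1}\<close> is \<open>complex ^ ('n option)\<close>, where the index \<open>None\<close>
  is \<open>\<zeta>\<^sub>0\<close> and \<open>Some j\<close> (j :: 'n) are \<open>\<zeta>\<^sub>1, \<dots>, \<zeta>\<^sub>n\<close>; so n = CARD('n).\<close>

type_synonym 'n cvec = "complex ^ ('n option)"

text \<open>C^k on an (open) set, via iterated Frechet (real) derivatives; smooth = C^k for all k.\<close>
fun Ck :: "nat \<Rightarrow> 'a::real_normed_vector set \<Rightarrow> ('a \<Rightarrow> 'b::real_normed_vector) \<Rightarrow> bool" where
  "Ck 0 S f = continuous_on S f"
| "Ck (Suc k) S f = (f differentiable_on S \<and> (\<forall>v. Ck k S (\<lambda>x. frechet_derivative f (at x) v)))"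

definition smooth_on :: "'a::real_normed_vector set \<Rightarrow> ('a \<Rightarrow> 'b::real_normed_vector) \<Rightarrow> bool" where
  "smooth_on S f \<longleftrightarrow> (\<forall>k. Ck k S f)"

definition punct :: "'n::finite cvec set" where
  "punct = - {0}"

definition Lform :: "'n::finite cvec \<Rightarrow> real" where
  "Lform \<zeta> = (cmod (\<zeta> $ None))\<^sup>2 - (\<Sum>j\<in>UNIV. (cmod (\<zeta> $ Some j))\<^sup>2)"

definition nullcone :: "'n::finite cvec set" where
  "nullcone = {\<zeta>. \<zeta> \<noteq> 0 \<and> Lform \<zeta> = 0}"

text \<open>Real partial derivatives along \<open>x_j\<close> and \<open>y_j\<close> where \<open>\<zeta>_j = x_j + i y_j\<close>.\<close>
definition dx :: "'n::finite option \<Rightarrow> ('n cvec \<Rightarrow> complex) \<Rightarrow> 'n cvec \<Rightarrow> complex" where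
  "dx j F z = frechet_derivative F (at z) (axis j 1)"

definition dy :: "'n::finite option \<Rightarrow> ('n cvec \<Rightarrow> complex) \<Rightarrow> 'n cvec \<Rightarrow> complex" where
  "dy j F z = frechet_derivative F (at z) (axis j \<i>)"

definition dz :: "'n::finite option \<Rightarrow> ('n cvec \<Rightarrow> complex) \<Rightarrow> 'n cvec \<Rightarrow> complex" where
  "dz j F z = (dx j F z - \<i> * dy j F z) / 2"

definition dzbar :: "'n::finite option \<Rightarrow> ('n cvec \<Rightarrow> complex) \<Rightarrow> 'n cvec \<Rightarrow> complex" where
  "dzbar j F z = (dx j F z + \<i> * dy j F z) / 2"

definition Lap :: "('n::finite cvec \<Rightarrow> complex) \<Rightarrow> 'n cvec \<Rightarrow> complex" where
  "Lap F z = dz None (dzbar None F) z - (\<Sum>j\<in>UNIV. dz (Some j) (dzbar (Some j) F) z)"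

definition hom00 :: "('n::finite cvec \<Rightarrow> 'b) \<Rightarrow> bool" where
  "hom00 F \<longleftrightarrow> (\<forall>\<zeta> (c::complex). \<zeta> \<noteq> 0 \<and> c \<noteq> 0 \<longrightarrow> F (c *s \<zeta>) = F \<zeta>)"

text \<open>Smooth real functions on \<open>\<N>\<close>: restrictions to the closed embedded submanifold \<open>\<N>\<close>
  of smooth functions on \<open>\<complex>^{n+1} \<setminus> {0}\<close> (only values on \<open>\<N>\<close> matter).\<close>
definition smooth_on_N :: "('n::finite cvec \<Rightarrow> real) \<Rightarrow> bool" where
  "smooth_on_N f \<longleftrightarrow> (\<exists>g. smooth_on punct g \<and> (\<forall>\<zeta>\<in>nullcone. g \<zeta> = f \<zeta>))"

definition Eclass :: "('n::finite cvec \<Rightarrow> real) set" where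
  "Eclass = {f. smooth_on_N f \<and> (\<forall>\<zeta>\<in>nullcone. \<forall>c::complex. c \<noteq> 0 \<longrightarrow> f (c *s \<zeta>) = f \<zeta>)}"

definition hom_ext :: "('n::finite cvec \<Rightarrow> real) \<Rightarrow> ('n cvec \<Rightarrow> real) \<Rightarrow> bool" where
  "hom_ext f F \<longleftrightarrow> smooth_on punct F \<and> hom00 F \<and> (\<forall>\<zeta>\<in>nullcone. F \<zeta> = f \<zeta>)"

text \<open>\<open>Q(f) = (\<Delta>^n F)|_\<N>\<close> for a (any) smooth homogeneous (0,0) extension F, n = CARD('n).\<close>
definition Qop :: "('n::finite cvec \<Rightarrow> real) \<Rightarrow> 'n cvec \<Rightarrow> complex" where
  "Qop f \<zeta> = (Lap ^^ CARD('n)) (\<lambda>z. complex_of_real ((SOME F. hom_ext f F) z)) \<zeta>"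

text \<open>\<open>u = O(L^k)\<close>: \<open>u = L^k h\<close> with h smooth on \<open>\<complex>^{n+1} \<setminus> {0}\<close>.\<close>
definition bigO_L :: "nat \<Rightarrow> ('n::finite cvec \<Rightarrow> complex) \<Rightarrow> bool" where
  "bigO_L k u \<longleftrightarrow> (\<exists>h. smooth_on punct h \<and> (\<forall>\<zeta>\<in>punct. u \<zeta> = complex_of_real (Lform \<zeta> ^ k) * h \<zeta>))"

end

theory Submission
  imports Defs
begin

text \<open>Start from any homogeneous extension \<open>F\<^sub>0\<close> of \<open>f\<close> (an arbitrary smooth extension composed
  with a map that is constant on complex lines) and improve it one order in \<open>L\<close> at a time. The
  engine is the commutator identity \<open>\<Delta>(L w) = L \<Delta>w + (n + 1 + p + q) w\<close> for \<open>w\<close> of bidegree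
  \<open>(p, q)\<close>, which iterates to \<open>\<Delta>(L\<^sup>j\<^sup>+\<^sup>1 g) = L\<^sup>j\<^sup>+\<^sup>1 \<Delta>g + (j + 1)(n - j - 1) L\<^sup>j g\<close> for \<open>g\<close> of
  bidegree \<open>(-j-1, -j-1)\<close>.

  If \<open>\<Delta>F = L\<^sup>j h\<close> and \<open>j + 1 \<noteq> n\<close>, adding \<open>L\<^sup>j\<^sup>+\<^sup>1 g\<close> with \<open>g = - Re h / ((j + 1)(n - j - 1))\<close>
  gives \<open>\<Delta>F = O(L\<^sup>j\<^sup>+\<^sup>1)\<close>; \<open>g\<close> is real because \<open>\<Delta>\<close> maps real functions to real functions
  (symmetry of second derivatives). If \<open>j + 1 = n\<close>, the same identity shows that on the null cone
  \<open>\<Delta>\<^sup>j(L\<^sup>j h) = c h\<close> with \<open>c \<noteq> 0\<close>, while \<open>\<Delta>\<^sup>j(L\<^sup>j h) = \<Delta>\<^sup>n F = \<Delta>\<^sup>n F\<^sub>0 = Q(f) = 0\<close> there since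
  \<open>F - F\<^sub>0\<close> is divisible by \<open>L\<close>. So \<open>h\<close> vanishes on the null cone, and a Hadamard-type division
  (integrating along lines transverse to the cone) writes \<open>h = L h'\<close> with \<open>h'\<close> smooth and
  bihomogeneous, which again gains an order.\<close>

section \<open>Calculus of smooth maps\<close>

lemma Ck_imp_continuous_on: "Ck k S f \<Longrightarrow> continuous_on S f"
  by (induction k arbitrary: f) (auto intro: differentiable_imp_continuous_on)

lemma Ck_Suc_imp_Ck: "Ck (Suc k) S f \<Longrightarrow> Ck k S f"
proof (induction k arbitrary: f)
  case 0
  then show ?case by (auto intro: differentiable_imp_continuous_on)
next
  case (Suc k)
  then show ?case by (metis Ck.simps(2))
qed

lemma Ck_Suc_has_derivative:
  assumes "open S" "Ck (Suc k) S f" "x \<in> S"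
  shows "(f has_derivative frechet_derivative f (at x)) (at x)"
proof -
  have "f differentiable (at x within S)"
    using assms by (auto simp: differentiable_on_def)
  then show ?thesis
    using assms at_within_open frechet_derivative_works by metis
qed

lemma frechet_derivative_transform_within_open:
  assumes "open S" "x \<in> S" "\<And>y. y \<in> S \<Longrightarrow> f y = g y" "f differentiable (at x)"
  shows "frechet_derivative g (at x) = frechet_derivative f (at x)"
proof -
  have "(g has_derivative frechet_derivative f (at x)) (at x)"
    using has_derivative_transform_within_open frechet_derivative_works assms by blast
  then show ?thesis
    using frechet_derivative_at by metis
qed

lemma Ck_transform_within_open:
  assumes "open S" "Ck k S f" "\<And>x. x \<in> S \<Longrightarrow> f x = g x"
  shows "Ck k S g"
  using assms(2,3)
proof (induction k arbitrary: f g)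
  case 0
  then show ?case using continuous_on_cong[of S S f g] by simp
next
  case (Suc k)
  have dg: "(g has_derivative frechet_derivative f (at x)) (at x)" if x: "x \<in> S" for x
    using has_derivative_transform_within_open[OF Ck_Suc_has_derivative[OF assms(1) Suc.prems(1) x]
        assms(1) x Suc.prems(2)] .
  then have "frechet_derivative g (at x) = frechet_derivative f (at x)" if "x \<in> S" for x
    using frechet_derivative_at that by metis
  then have "Ck k S (\<lambda>x. frechet_derivative g (at x) v)" for v
    using Suc.IH[of "\<lambda>x. frechet_derivative f (at x) v" "\<lambda>x. frechet_derivative g (at x) v"]
      Suc.prems(1) by simp
  moreover have "g differentiable_on S"
    using dg by (meson differentiableI has_derivative_at_withinI differentiable_on_def)
  ultimately show ?case by simp
qed

lemma Ck_SucI: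
  assumes "open S" "\<And>x. x \<in> S \<Longrightarrow> (f has_derivative f' x) (at x)"
    "\<And>v. Ck k S (\<lambda>x. f' x v)"
  shows "Ck (Suc k) S f"
proof -
  have "f differentiable_on S"
    using assms(2) by (meson differentiableI differentiable_at_withinI differentiable_on_def)
  moreover have "frechet_derivative f (at x) = f' x" if "x \<in> S" for x
    using assms(2)[OF that] frechet_derivative_at by metis
  then have "Ck k S (\<lambda>x. frechet_derivative f (at x) v)" for v
    by (intro Ck_transform_within_open[OF assms(1) assms(3)[of v]]) simp
  ultimately show ?thesis by simp
qed

lemma Ck_const: "open S \<Longrightarrow> Ck k S (\<lambda>x. c)"
proof (induction k arbitrary: c)
  case 0
  then show ?case by simp
next
  case (Suc k)
  show ?case by (rule Ck_SucI[where f'="\<lambda>x v. 0"]) (auto simp: Suc)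
qed

lemma Ck_id: "open S \<Longrightarrow> Ck k S (\<lambda>x. x)"
proof (induction k)
  case 0
  then show ?case by (simp add: continuous_on_id)
next
  case (Suc k)
  show ?case by (rule Ck_SucI[OF Suc.prems, where f'="\<lambda>x v. v"]) (auto simp: Ck_const[OF Suc.prems])
qed

lemma Ck_linear:
  assumes "open S" "bounded_linear l" "Ck k S f"
  shows "Ck k S (\<lambda>x. l (f x))"
  using assms(3)
proof (induction k arbitrary: f)
  case 0
  then show ?case
    using continuous_on_compose2[of UNIV l S f] linear_continuous_on[OF assms(2)] by simp
next
  case (Suc k)
  show ?case
  proof (rule Ck_SucI[OF assms(1), where f'="\<lambda>x v. l (frechet_derivative f (at x) v)"])
    show "((\<lambda>x. l (f x)) has_derivative (\<lambda>v. l (frechet_derivative f (at x) v))) (at x)"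
      if "x \<in> S" for x
      using bounded_linear.has_derivative[OF assms(2) Ck_Suc_has_derivative[OF assms(1) Suc.prems that]] .
    show "Ck k S (\<lambda>x. l (frechet_derivative f (at x) v))" for v
      using Suc.IH Suc.prems by simp
  qed
qed

lemma Ck_add:
  assumes "open S" "Ck k S f" "Ck k S g"
  shows "Ck k S (\<lambda>x. f x + g x)"
  using assms(2,3)
proof (induction k arbitrary: f g)
  case 0
  then show ?case by (simp add: continuous_on_add)
next
  case (Suc k)
  let ?D = "\<lambda>x v. frechet_derivative f (at x) v + frechet_derivative g (at x) v"
  show ?case
  proof (rule Ck_SucI[OF assms(1), where f'="?D"])
    show "((\<lambda>x. f x + g x) has_derivative ?D x) (at x)" if "x \<in> S" for x
      using has_derivative_add Ck_Suc_has_derivative[OF assms(1) _ that] Suc.prems by blast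
    show "Ck k S (\<lambda>x. ?D x v)" for v
      using Suc.IH Suc.prems by simp
  qed
qed

lemma Ck_sum:
  assumes "open S" "finite I" "\<And>i. i \<in> I \<Longrightarrow> Ck k S (f i)"
  shows "Ck k S (\<lambda>x. \<Sum>i\<in>I. f i x)"
  using assms(2,3)
  by (induction I rule: finite_induct) (auto intro!: Ck_add[OF assms(1)] Ck_const[OF assms(1)])

lemma Ck_bilinear:
  assumes "open S" "bounded_bilinear bop" "Ck k S f" "Ck k S g"
  shows "Ck k S (\<lambda>x. bop (f x) (g x))"
  using assms(3,4)
proof (induction k arbitrary: f g)
  case 0
  then show ?case using bounded_bilinear.continuous_on[OF assms(2)] by simp
next
  case (Suc k)
  let ?D = "\<lambda>x v. bop (f x) (frechet_derivative g (at x) v) + bop (frechet_derivative f (at x) v) (g x)"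
  show ?case
  proof (rule Ck_SucI[OF assms(1), where f'="?D"])
    show "((\<lambda>x. bop (f x) (g x)) has_derivative ?D x) (at x)" if "x \<in> S" for x
      using bounded_bilinear.FDERIV[OF assms(2) Ck_Suc_has_derivative[OF assms(1) Suc.prems(1) that]
          Ck_Suc_has_derivative[OF assms(1) Suc.prems(2) that]] .
    have "Ck k S f" "Ck k S g"
      using Suc.prems Ck_Suc_imp_Ck by blast+
    then show "Ck k S (\<lambda>x. ?D x v)" for v
      using Suc.prems by (intro Ck_add[OF assms(1)] Suc.IH) simp_all
  qed
qed

lemma linear_eq_sum_Basis:
  fixes l :: "'a::euclidean_space \<Rightarrow> 'b::real_normed_vector"
  assumes "linear l"
  shows "l y = (\<Sum>b\<in>Basis. (y \<bullet> b) *\<^sub>R l b)"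
proof -
  have "l y = l (\<Sum>b\<in>Basis. (y \<bullet> b) *\<^sub>R b)"
    by (simp add: euclidean_representation)
  then show ?thesis
    by (simp add: linear_sum[OF assms] linear_scale[OF assms])
qed

lemma Ck_compose:
  fixes \<phi> :: "'a::real_normed_vector \<Rightarrow> 'c::euclidean_space" and g :: "'c \<Rightarrow> 'b::real_normed_vector"
  assumes "open S" "open T" "\<phi> ` S \<subseteq> T" "Ck k S \<phi>" "Ck k T g"
  shows "Ck k S (\<lambda>x. g (\<phi> x))"
  using assms(4,5)
proof (induction k arbitrary: g)
  case 0
  then show ?case using continuous_on_compose2[of T g S \<phi>] assms(3) by simp
next
  case (Suc k)
  let ?D = "\<lambda>x v. \<Sum>b\<in>Basis. (frechet_derivative \<phi> (at x) v \<bullet> b) *\<^sub>R frechet_derivative g (at (\<phi> x)) b"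
  show ?case
  proof (rule Ck_SucI[OF assms(1), where f'="?D"])
    fix x assume x: "x \<in> S"
    have dg: "(g has_derivative frechet_derivative g (at (\<phi> x))) (at (\<phi> x))"
      using Ck_Suc_has_derivative[OF assms(2) Suc.prems(2)] x assms(3) by blast
    have "((\<lambda>x. g (\<phi> x)) has_derivative (\<lambda>v. frechet_derivative g (at (\<phi> x)) (frechet_derivative \<phi> (at x) v))) (at x)"
      using has_derivative_compose[OF Ck_Suc_has_derivative[OF assms(1) Suc.prems(1) x] dg] .
    moreover have "frechet_derivative g (at (\<phi> x)) (frechet_derivative \<phi> (at x) v) = ?D x v" for v
      using linear_eq_sum_Basis[OF has_derivative_linear[OF dg]] .
    ultimately show "((\<lambda>x. g (\<phi> x)) has_derivative ?D x) (at x)"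
      by simp
  next
    fix v
    have "Ck k S (\<lambda>x. frechet_derivative \<phi> (at x) v \<bullet> b)" for b
      by (intro Ck_linear[OF assms(1) bounded_linear_inner_left]) (use Suc.prems(1) in simp)
    moreover have "Ck k S (\<lambda>x. frechet_derivative g (at (\<phi> x)) b)" for b
      using Suc.IH[OF Ck_Suc_imp_Ck[OF Suc.prems(1)], of "\<lambda>y. frechet_derivative g (at y) b"] Suc.prems(2)
      by simp
    ultimately show "Ck k S (\<lambda>x. ?D x v)"
      by (intro Ck_sum[OF assms(1)] Ck_bilinear[OF assms(1) bounded_bilinear_scaleR]) auto
  qed
qed

lemma Ck_inverse: "Ck k (-{0}) (inverse :: 'a::real_normed_field \<Rightarrow> 'a)"
proof (induction k)
  case 0
  then show ?case by (simp add: continuous_on_inverse continuous_on_id)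
next
  case (Suc k)
  have o: "open (-{0::'a})" by auto
  note mult = Ck_bilinear[OF o bounded_bilinear_mult]
  show ?case
  proof (rule Ck_SucI[OF o, where f'="\<lambda>x v. - (inverse x * v * inverse x)"])
    fix x :: 'a assume "x \<in> -{0}"
    then show "(inverse has_derivative (\<lambda>v. - (inverse x * v * inverse x))) (at x)"
      using has_derivative_inverse' by auto
  next
    fix v :: 'a
    have "Ck k (-{0}) (\<lambda>x. inverse x * v * inverse x)"
      using mult[OF mult[OF Suc Ck_const[OF o]] Suc] by simp
    then show "Ck k (-{0}) (\<lambda>x. - (inverse x * v * inverse x))"
      using Ck_linear[OF o bounded_linear_minus[OF bounded_linear_ident]] by blast
  qed
qed

lemma Ck_sqrt: "Ck k {0<..} (sqrt :: real \<Rightarrow> real)"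
proof (induction k)
  case 0
  then show ?case by (simp add: continuous_on_real_sqrt continuous_on_id)
next
  case (Suc k)
  have o: "open {0::real<..}" by auto
  show ?case
  proof (rule Ck_SucI[OF o, where f'="\<lambda>x. (*) (inverse (sqrt x) / 2)"])
    show "(sqrt has_derivative (*) (inverse (sqrt x) / 2)) (at x)" if "x \<in> {0<..}" for x
      using DERIV_real_sqrt[of x] that unfolding has_field_derivative_def by simp
    have "Ck k {0<..} (\<lambda>x. inverse (sqrt x))"
      by (rule Ck_compose[OF o _ _ Suc Ck_inverse]) auto
    then have "Ck k {0<..} (\<lambda>x. inverse (sqrt x) * (v / 2))" for v
      by (intro Ck_bilinear[OF o bounded_bilinear_mult] Ck_const[OF o])
    then show "Ck k {0<..} (\<lambda>x. inverse (sqrt x) / 2 * v)" for v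
      by simp
  qed
qed

lemma Ck_subset: "Ck k S f \<Longrightarrow> U \<subseteq> S \<Longrightarrow> Ck k U f"
  by (induction k arbitrary: f) (auto intro: continuous_on_subset differentiable_on_subset)

lemma Ck_local:
  assumes "open S" "\<And>x. x \<in> S \<Longrightarrow> \<exists>U. open U \<and> x \<in> U \<and> U \<subseteq> S \<and> Ck k U f"
  shows "Ck k S f"
  using assms(2)
proof (induction k arbitrary: f)
  case 0
  have "continuous (at x) f" if "x \<in> S" for x
    using 0 that continuous_on_eq_continuous_at by (metis Ck.simps(1))
  then show ?case
    unfolding Ck.simps continuous_on_eq_continuous_at[OF assms(1)] by blast
next
  case (Suc k)
  show ?case
  proof (rule Ck_SucI[OF assms(1), where f'="\<lambda>x. frechet_derivative f (at x)"])
    show "(f has_derivative frechet_derivative f (at x)) (at x)" if "x \<in> S" for x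
      using Suc.prems that Ck_Suc_has_derivative by blast
    show "Ck k S (\<lambda>x. frechet_derivative f (at x) v)" for v
      by (rule Suc.IH) (use Suc.prems in fastforce)
  qed
qed

lemma smooth_on_Ck: "smooth_on S f \<Longrightarrow> Ck k S f"
  by (simp add: smooth_on_def)

lemma smooth_on_imp_continuous_on: "smooth_on S f \<Longrightarrow> continuous_on S f"
  using Ck_imp_continuous_on smooth_on_Ck by blast

lemma smooth_on_const: "open S \<Longrightarrow> smooth_on S (\<lambda>x. c)"
  by (simp add: smooth_on_def Ck_const)

lemma smooth_on_id: "open S \<Longrightarrow> smooth_on S (\<lambda>x. x)"
  by (simp add: smooth_on_def Ck_id)

lemma smooth_on_transform_within_open:
  "open S \<Longrightarrow> smooth_on S f \<Longrightarrow> (\<And>x. x \<in> S \<Longrightarrow> f x = g x) \<Longrightarrow> smooth_on S g"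
  by (meson Ck_transform_within_open smooth_on_def)

lemma smooth_on_linear:
  "open S \<Longrightarrow> bounded_linear l \<Longrightarrow> smooth_on S f \<Longrightarrow> smooth_on S (\<lambda>x. l (f x))"
  by (simp add: smooth_on_def Ck_linear)

lemma smooth_on_add: "open S \<Longrightarrow> smooth_on S f \<Longrightarrow> smooth_on S g \<Longrightarrow> smooth_on S (\<lambda>x. f x + g x)"
  by (simp add: smooth_on_def Ck_add)

lemma smooth_on_minus: "open S \<Longrightarrow> smooth_on S f \<Longrightarrow> smooth_on S (\<lambda>x. - f x)"
  using smooth_on_linear[OF _ bounded_linear_minus[OF bounded_linear_ident]] by blast

lemma smooth_on_diff: "open S \<Longrightarrow> smooth_on S f \<Longrightarrow> smooth_on S g \<Longrightarrow> smooth_on S (\<lambda>x. f x - g x)"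
  using smooth_on_add[of S f "\<lambda>x. - g x"] smooth_on_minus[of S g] by simp

lemma smooth_on_sum:
  "open S \<Longrightarrow> finite I \<Longrightarrow> (\<And>i. i \<in> I \<Longrightarrow> smooth_on S (f i)) \<Longrightarrow> smooth_on S (\<lambda>x. \<Sum>i\<in>I. f i x)"
  by (simp add: smooth_on_def Ck_sum)

lemma smooth_on_bilinear:
  "open S \<Longrightarrow> bounded_bilinear bop \<Longrightarrow> smooth_on S f \<Longrightarrow> smooth_on S g
    \<Longrightarrow> smooth_on S (\<lambda>x. bop (f x) (g x))"
  by (simp add: smooth_on_def Ck_bilinear)

lemma smooth_on_mult:
  "open S \<Longrightarrow> smooth_on S f \<Longrightarrow> smooth_on S g \<Longrightarrow> smooth_on S (\<lambda>x. f x * g x :: 'a::real_normed_algebra)"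
  using smooth_on_bilinear[OF _ bounded_bilinear_mult] by blast

lemma smooth_on_scaleR:
  "open S \<Longrightarrow> smooth_on S f \<Longrightarrow> smooth_on S g \<Longrightarrow> smooth_on S (\<lambda>x. f x *\<^sub>R g x)"
  using smooth_on_bilinear[OF _ bounded_bilinear_scaleR] by blast

lemma smooth_on_power:
  "open S \<Longrightarrow> smooth_on S f \<Longrightarrow> smooth_on S (\<lambda>x. f x ^ k :: 'a::real_normed_algebra_1)"
  by (induction k) (auto intro: smooth_on_mult smooth_on_const)

lemma smooth_on_compose:
  fixes \<phi> :: "'a::real_normed_vector \<Rightarrow> 'c::euclidean_space" and g :: "'c \<Rightarrow> 'b::real_normed_vector"
  shows "open S \<Longrightarrow> open T \<Longrightarrow> \<phi> ` S \<subseteq> T \<Longrightarrow> smooth_on S \<phi> \<Longrightarrow> smooth_on T g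
    \<Longrightarrow> smooth_on S (\<lambda>x. g (\<phi> x))"
  by (simp add: smooth_on_def Ck_compose)

lemma smooth_on_inverse:
  fixes f :: "'a::real_normed_vector \<Rightarrow> 'b::{real_normed_field,euclidean_space}"
  shows "open S \<Longrightarrow> smooth_on S f \<Longrightarrow> (\<And>x. x \<in> S \<Longrightarrow> f x \<noteq> 0) \<Longrightarrow> smooth_on S (\<lambda>x. inverse (f x))"
proof -
  assume "open S" "smooth_on S f" "\<And>x. x \<in> S \<Longrightarrow> f x \<noteq> 0"
  moreover have "smooth_on (-{0}) (inverse :: 'b \<Rightarrow> 'b)"
    by (simp add: smooth_on_def Ck_inverse)
  ultimately show ?thesis
    by (intro smooth_on_compose[of S "-{0}" f inverse]) auto
qed

lemma smooth_on_sqrt: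
  "open S \<Longrightarrow> smooth_on S f \<Longrightarrow> (\<And>x. x \<in> S \<Longrightarrow> f x > 0) \<Longrightarrow> smooth_on S (\<lambda>x. sqrt (f x))"
proof -
  assume "open S" "smooth_on S f" "\<And>x. x \<in> S \<Longrightarrow> f x > 0"
  moreover have "smooth_on {0<..} sqrt"
    by (simp add: smooth_on_def Ck_sqrt)
  ultimately show ?thesis
    by (intro smooth_on_compose[of S "{0<..}" f sqrt]) auto
qed

lemma smooth_on_subset: "smooth_on S f \<Longrightarrow> U \<subseteq> S \<Longrightarrow> smooth_on U f"
  by (meson Ck_subset smooth_on_def)

lemma smooth_on_local:
  "open S \<Longrightarrow> (\<And>x. x \<in> S \<Longrightarrow> \<exists>U. open U \<and> x \<in> U \<and> U \<subseteq> S \<and> smooth_on U f) \<Longrightarrow> smooth_on S f"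
  by (metis Ck_local smooth_on_def)

lemma smooth_on_frechet_derivative:
  "open S \<Longrightarrow> smooth_on S f \<Longrightarrow> smooth_on S (\<lambda>x. frechet_derivative f (at x) v)"
  by (metis Ck.simps(2) smooth_on_def)

lemma smooth_on_has_derivative:
  "open S \<Longrightarrow> smooth_on S f \<Longrightarrow> x \<in> S \<Longrightarrow> (f has_derivative frechet_derivative f (at x)) (at x)"
  using Ck_Suc_has_derivative smooth_on_def by blast

lemma smooth_on_differentiable: "open S \<Longrightarrow> smooth_on S f \<Longrightarrow> x \<in> S \<Longrightarrow> f differentiable (at x)"
  using smooth_on_has_derivative differentiableI by blast

lemma smooth_on_continuous_at: "open S \<Longrightarrow> smooth_on S f \<Longrightarrow> x \<in> S \<Longrightarrow> continuous (at x) f"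
  using smooth_on_imp_continuous_on continuous_on_eq_continuous_at by blast

section \<open>Wirtinger derivatives and the Laplacian\<close>

definition Lsign :: "'n option \<Rightarrow> complex" where
  "Lsign i = (case i of None \<Rightarrow> 1 | Some _ \<Rightarrow> -1)"

lemma Lsign_mult_Lsign [simp]: "Lsign i * (Lsign i * a) = a"
  by (cases i) (auto simp: Lsign_def)

lemma sum_UNIV_option:
  "(\<Sum>i\<in>(UNIV::'n::finite option set). f i) = f None + (\<Sum>j\<in>UNIV. f (Some j))"
proof -
  have "(\<Sum>i\<in>(UNIV::'n option set). f i) = f None + sum f (range Some)"
    unfolding UNIV_option_conv by (subst sum.insert) auto
  also have "sum f (range Some) = (\<Sum>j\<in>UNIV. f (Some j))"
    by (subst sum.reindex) auto
  finally show ?thesis .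
qed

definition Lc :: "'n::finite cvec \<Rightarrow> complex" where
  "Lc z = complex_of_real (Lform z)"

lemma Lc_eq_sum: "Lc z = (\<Sum>i\<in>UNIV. Lsign i * (z $ i * cnj (z $ i)))"
  by (simp add: Lc_def Lform_def sum_UNIV_option Lsign_def complex_norm_square[symmetric] sum_negf)

lemma Lc_power: "Lc z ^ m = complex_of_real (Lform z ^ m)"
  by (simp add: Lc_def)

lemma Lap_eq_Lsign_sum: "Lap F z = (\<Sum>i\<in>UNIV. Lsign i * dz i (dzbar i F) z)"
  by (simp add: Lap_def sum_UNIV_option Lsign_def sum_negf)

lemma dz_eq_derivative:
  "(G has_derivative G') (at z) \<Longrightarrow> dz j G z = (G' (axis j 1) - \<i> * G' (axis j \<i>)) / 2"
  by (simp add: dz_def dx_def dy_def frechet_derivative_at[symmetric])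

lemma dzbar_eq_derivative:
  "(G has_derivative G') (at z) \<Longrightarrow> dzbar j G z = (G' (axis j 1) + \<i> * G' (axis j \<i>)) / 2"
  by (simp add: dzbar_def dx_def dy_def frechet_derivative_at[symmetric])

lemma derivative_axis_eq_Wirtinger:
  assumes "(G has_derivative G') (at z)"
  shows "G' (axis j l) = l * dz j G z + cnj l * dzbar j G z"
proof -
  have lin: "linear G'"
    using assms has_derivative_linear by blast
  have "axis j l = Re l *\<^sub>R axis j 1 + Im l *\<^sub>R axis j \<i>"
    by (simp add: vec_eq_iff axis_def complex_eq_iff)
  then have "G' (axis j l) = Re l *\<^sub>R G' (axis j 1) + Im l *\<^sub>R G' (axis j \<i>)"
    by (simp add: linear_add[OF lin] linear_scale[OF lin])
  also have "\<dots> = l * dz j G z + cnj l * dzbar j G z"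
    unfolding dz_eq_derivative[OF assms] dzbar_eq_derivative[OF assms]
    by (cases l) (simp add: scaleR_conv_of_real Complex_eq field_simps)
  finally show ?thesis .
qed

lemma derivative_eq_Wirtinger_sum:
  assumes "(G has_derivative G') (at z)"
  shows "G' v = (\<Sum>i\<in>UNIV. v $ i * dz i G z + cnj (v $ i) * dzbar i G z)"
proof -
  have "v = (\<Sum>i\<in>UNIV. axis i (v $ i))"
    by (simp add: vec_eq_iff axis_def sum.delta)
  then have "G' v = (\<Sum>i\<in>UNIV. G' (axis i (v $ i)))"
    by (metis linear_sum[OF has_derivative_linear[OF assms]])
  then show ?thesis
    using derivative_axis_eq_Wirtinger[OF assms] by simp
qed

lemma
  assumes "G1 differentiable (at z)" "G2 differentiable (at z)"
  shows dz_add: "dz j (\<lambda>x. G1 x + G2 x) z = dz j G1 z + dz j G2 z"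
    and dzbar_add: "dzbar j (\<lambda>x. G1 x + G2 x) z = dzbar j G1 z + dzbar j G2 z"
    and dz_mult: "dz j (\<lambda>x. G1 x * G2 x) z = dz j G1 z * G2 z + G1 z * dz j G2 z"
    and dzbar_mult: "dzbar j (\<lambda>x. G1 x * G2 x) z = dzbar j G1 z * G2 z + G1 z * dzbar j G2 z"
proof -
  note d1 = frechet_derivative_works[THEN iffD1, OF assms(1)]
  note d2 = frechet_derivative_works[THEN iffD1, OF assms(2)]
  note eqs = dz_eq_derivative[OF d1] dz_eq_derivative[OF d2]
    dzbar_eq_derivative[OF d1] dzbar_eq_derivative[OF d2]
  show "dz j (\<lambda>x. G1 x + G2 x) z = dz j G1 z + dz j G2 z"
    "dzbar j (\<lambda>x. G1 x + G2 x) z = dzbar j G1 z + dzbar j G2 z"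
    using has_derivative_add[OF d1 d2]
    by (simp_all add: dz_eq_derivative dzbar_eq_derivative eqs field_simps)
  show "dz j (\<lambda>x. G1 x * G2 x) z = dz j G1 z * G2 z + G1 z * dz j G2 z"
    "dzbar j (\<lambda>x. G1 x * G2 x) z = dzbar j G1 z * G2 z + G1 z * dzbar j G2 z"
    using has_derivative_mult[OF d1 d2]
    by (simp_all add: dz_eq_derivative dzbar_eq_derivative eqs field_simps)
qed

lemma
  shows dz_const: "dz j (\<lambda>x. c) z = 0"
    and dzbar_const: "dzbar j (\<lambda>x. c) z = 0"
  by (simp_all add: dz_eq_derivative[OF has_derivative_const] dzbar_eq_derivative[OF has_derivative_const])

lemma
  assumes "G differentiable (at z)"
  shows dz_cmult: "dz j (\<lambda>x. c * G x) z = c * dz j G z"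
    and dzbar_cmult: "dzbar j (\<lambda>x. c * G x) z = c * dzbar j G z"
  using dz_mult[OF differentiable_const assms] dzbar_mult[OF differentiable_const assms]
  by (simp_all add: dz_const dzbar_const)

lemma
  assumes "finite I" "\<And>i. i \<in> I \<Longrightarrow> G i differentiable (at z)"
  shows dz_sum: "dz j (\<lambda>x. \<Sum>i\<in>I. G i x) z = (\<Sum>i\<in>I. dz j (G i) z)"
    and dzbar_sum: "dzbar j (\<lambda>x. \<Sum>i\<in>I. G i x) z = (\<Sum>i\<in>I. dzbar j (G i) z)"
proof -
  note dG = frechet_derivative_works[THEN iffD1, OF assms(2)]
  have d: "((\<lambda>x. \<Sum>i\<in>I. G i x) has_derivative (\<lambda>h. \<Sum>i\<in>I. frechet_derivative (G i) (at z) h)) (at z)"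
    by (intro has_derivative_sum dG)
  let ?D = "\<lambda>i v. frechet_derivative (G i) (at z) v"
  have "(\<Sum>i\<in>I. dz j (G i) z) = (\<Sum>i\<in>I. (?D i (axis j 1) - \<i> * ?D i (axis j \<i>)) / 2)"
    by (rule sum.cong) (auto simp: dz_eq_derivative[OF dG])
  then show "dz j (\<lambda>x. \<Sum>i\<in>I. G i x) z = (\<Sum>i\<in>I. dz j (G i) z)"
    unfolding dz_eq_derivative[OF d]
    by (simp add: sum_subtractf sum_divide_distrib sum_distrib_left diff_divide_distrib)
  have "(\<Sum>i\<in>I. dzbar j (G i) z) = (\<Sum>i\<in>I. (?D i (axis j 1) + \<i> * ?D i (axis j \<i>)) / 2)"
    by (rule sum.cong) (auto simp: dzbar_eq_derivative[OF dG])
  then show "dzbar j (\<lambda>x. \<Sum>i\<in>I. G i x) z = (\<Sum>i\<in>I. dzbar j (G i) z)"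
    unfolding dzbar_eq_derivative[OF d]
    by (simp add: sum.distrib sum_divide_distrib sum_distrib_left add_divide_distrib)
qed

lemma has_derivative_vec_nth: "((\<lambda>x. x $ i) has_derivative (\<lambda>h. h $ i)) (at z)"
  using bounded_linear_vec_nth bounded_linear_imp_has_derivative by blast

lemma has_derivative_cnj_vec_nth: "((\<lambda>x. cnj (x $ i)) has_derivative (\<lambda>h. cnj (h $ i))) (at z)"
  using bounded_linear_imp_has_derivative bounded_linear_compose[OF bounded_linear_cnj bounded_linear_vec_nth]
  by blast

lemma
  shows dz_vec_nth: "dz j (\<lambda>x. x $ i) z = of_bool (i = j)"
    and dzbar_vec_nth: "dzbar j (\<lambda>x. x $ i) z = 0"
    and dz_cnj_vec_nth: "dz j (\<lambda>x. cnj (x $ i)) z = 0"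
    and dzbar_cnj_vec_nth: "dzbar j (\<lambda>x. cnj (x $ i)) z = of_bool (i = j)"
  by (simp_all add: dz_eq_derivative[OF has_derivative_vec_nth] dzbar_eq_derivative[OF has_derivative_vec_nth]
      dz_eq_derivative[OF has_derivative_cnj_vec_nth] dzbar_eq_derivative[OF has_derivative_cnj_vec_nth] axis_def)

lemma differentiable_vec_nth:
  "(\<lambda>x. x $ i) differentiable (at z)" "(\<lambda>x. cnj (x $ i)) differentiable (at z)"
  using has_derivative_vec_nth has_derivative_cnj_vec_nth differentiableI by blast+

lemma
  assumes "open S" "z \<in> S" "\<And>x. x \<in> S \<Longrightarrow> G x = H x" "smooth_on S H"
  shows dz_transform_within_open: "dz j G z = dz j H z"
    and dzbar_transform_within_open: "dzbar j G z = dzbar j H z"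
  using frechet_derivative_transform_within_open[OF assms(1,2), of H G] assms(3,4)
    smooth_on_differentiable[OF assms(1,4,2)]
  by (simp_all add: dz_def dzbar_def dx_def dy_def)

lemma
  assumes "open S" "smooth_on S G"
  shows smooth_on_dz: "smooth_on S (dz j G)"
    and smooth_on_dzbar: "smooth_on S (dzbar j G)"
proof -
  have bl: "bounded_linear (\<lambda>x::complex. x / 2)"
    by (simp add: bounded_linear_divide bounded_linear_ident)
  have a: "smooth_on S (\<lambda>z. frechet_derivative G (at z) (axis j 1))"
       "smooth_on S (\<lambda>z. \<i> * frechet_derivative G (at z) (axis j \<i>))"
    using smooth_on_frechet_derivative[OF assms] smooth_on_mult[OF assms(1) smooth_on_const[OF assms(1)]]
    by blast+
  have "dz j G = (\<lambda>z. (frechet_derivative G (at z) (axis j 1) - \<i> * frechet_derivative G (at z) (axis j \<i>)) / 2)"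
    by (simp add: fun_eq_iff dz_def dx_def dy_def)
  then show "smooth_on S (dz j G)"
    using smooth_on_linear[OF assms(1) bl smooth_on_diff[OF assms(1) a]] by simp
  have "dzbar j G = (\<lambda>z. (frechet_derivative G (at z) (axis j 1) + \<i> * frechet_derivative G (at z) (axis j \<i>)) / 2)"
    by (simp add: fun_eq_iff dzbar_def dx_def dy_def)
  then show "smooth_on S (dzbar j G)"
    using smooth_on_linear[OF assms(1) bl smooth_on_add[OF assms(1) a]] by simp
qed

lemma smooth_on_Lap: "open S \<Longrightarrow> smooth_on S G \<Longrightarrow> smooth_on S (Lap G)"
  unfolding Lap_eq_Lsign_sum[abs_def]
  by (intro smooth_on_sum smooth_on_mult smooth_on_const smooth_on_dz smooth_on_dzbar) auto

lemma smooth_on_vec_nth: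
  "open S \<Longrightarrow> smooth_on S (\<lambda>x. x $ i)" "open S \<Longrightarrow> smooth_on S (\<lambda>x. cnj (x $ i))"
  using smooth_on_linear[OF _ bounded_linear_vec_nth smooth_on_id]
    smooth_on_linear[OF _ bounded_linear_compose[OF bounded_linear_cnj bounded_linear_vec_nth] smooth_on_id]
  by auto

lemma smooth_on_Lc: "open S \<Longrightarrow> smooth_on S Lc"
  unfolding Lc_eq_sum[abs_def]
  by (intro smooth_on_sum smooth_on_mult smooth_on_const smooth_on_vec_nth) auto

lemma differentiable_Lc: "Lc differentiable (at z)"
  using smooth_on_differentiable[OF open_UNIV smooth_on_Lc[OF open_UNIV]] by simp

lemma
  fixes z :: "'n::finite cvec"
  shows dz_Lc: "dz j Lc z = Lsign j * cnj (z $ j)"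
    and dzbar_Lc: "dzbar j Lc z = Lsign j * z $ j"
proof -
  have d: "(\<lambda>x. Lsign i * (x $ i * cnj (x $ i))) differentiable (at z)" for i
    by (intro differentiable_mult differentiable_const differentiable_vec_nth)
  have d2: "(\<lambda>x. x $ i * cnj (x $ i)) differentiable (at z)" for i
    by (intro differentiable_mult differentiable_vec_nth)
  have delta: "(\<Sum>i\<in>UNIV. a i * (of_bool (i = j) * b i)) = a j * b j" for a b :: "'n option \<Rightarrow> complex"
  proof -
    have "(\<Sum>i\<in>UNIV. a i * (of_bool (i = j) * b i)) = (\<Sum>i\<in>UNIV. if i = j then a j * b j else 0)"
      by (rule sum.cong) auto
    then show ?thesis by simp
  qed
  have delta': "(\<Sum>i\<in>UNIV. a i * (b i * of_bool (i = j))) = a j * b j" for a b :: "'n option \<Rightarrow> complex"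
    using delta[of a b] by (simp add: mult.commute)
  show "dz j Lc z = Lsign j * cnj (z $ j)"
    unfolding Lc_eq_sum[abs_def] dz_sum[OF finite_class.finite_UNIV d] dz_cmult[OF d2] dz_mult[OF differentiable_vec_nth]
    by (simp add: dz_vec_nth dz_cnj_vec_nth delta delta')
  show "dzbar j Lc z = Lsign j * z $ j"
    unfolding Lc_eq_sum[abs_def] dzbar_sum[OF finite_class.finite_UNIV d] dzbar_cmult[OF d2] dzbar_mult[OF differentiable_vec_nth]
    by (simp add: dzbar_vec_nth dzbar_cnj_vec_nth delta delta')
qed

lemma Lap_transform_within_open:
  assumes "open S" "z \<in> S" "\<And>x. x \<in> S \<Longrightarrow> G x = H x" "smooth_on S H"
  shows "Lap G z = Lap H z"
proof -
  have "dz i (dzbar i G) z = dz i (dzbar i H) z" for i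
    using dzbar_transform_within_open[OF assms(1) _ assms(3,4)]
    by (intro dz_transform_within_open[OF assms(1,2)] smooth_on_dzbar[OF assms(1,4)]) auto
  then show ?thesis by (simp add: Lap_eq_Lsign_sum)
qed

lemma Lap_add:
  assumes "open S" "z \<in> S" "smooth_on S G1" "smooth_on S G2"
  shows "Lap (\<lambda>x. G1 x + G2 x) z = Lap G1 z + Lap G2 z"
proof -
  note diff = smooth_on_differentiable[OF assms(1)]
  have "dz i (dzbar i (\<lambda>x. G1 x + G2 x)) z = dz i (\<lambda>x. dzbar i G1 x + dzbar i G2 x) z" for i
    by (rule dz_transform_within_open[OF assms(1,2)])
      (auto intro!: dzbar_add diff smooth_on_add smooth_on_dzbar assms)
  also have "\<dots> i = dz i (dzbar i G1) z + dz i (dzbar i G2) z" for i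
    by (intro dz_add diff[OF _ assms(2)] smooth_on_dzbar assms)
  finally show ?thesis
    by (simp add: Lap_eq_Lsign_sum sum.distrib algebra_simps)
qed

lemma Lap_cmult:
  assumes "open S" "z \<in> S" "smooth_on S G"
  shows "Lap (\<lambda>x. c * G x) z = c * Lap G z"
proof -
  note diff = smooth_on_differentiable[OF assms(1)]
  have "dz i (dzbar i (\<lambda>x. c * G x)) z = dz i (\<lambda>x. c * dzbar i G x) z" for i
    by (rule dz_transform_within_open[OF assms(1,2)])
      (auto intro!: dzbar_cmult diff smooth_on_mult smooth_on_const smooth_on_dzbar assms)
  also have "\<dots> i = c * dz i (dzbar i G) z" for i
    by (intro dz_cmult diff[OF _ assms(2)] smooth_on_dzbar assms)
  finally show ?thesis
    by (simp add: Lap_eq_Lsign_sum sum_distrib_left algebra_simps)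
qed

section \<open>Bihomogeneous functions and the commutator of \<open>\<Delta>\<close> with \<open>L\<close>\<close>

definition bihom :: "int \<Rightarrow> int \<Rightarrow> ('n::finite cvec \<Rightarrow> complex) \<Rightarrow> bool" where
  "bihom p q w \<longleftrightarrow> (\<forall>z c. z \<noteq> 0 \<and> c \<noteq> 0 \<longrightarrow> w (c *s z) = c powi p * cnj c powi q * w z)"

lemma hom00_iff_bihom: "hom00 F \<longleftrightarrow> bihom 0 0 (\<lambda>x. complex_of_real (F x))"
  by (simp add: hom00_def bihom_def)

lemma open_punct: "open punct"
  by (simp add: punct_def open_Compl)

lemma in_punct [simp]: "z \<in> punct \<longleftrightarrow> z \<noteq> 0"
  by (simp add: punct_def)

lemma bounded_bilinear_vector_smult: "bounded_bilinear (\<lambda>(c::complex) (v::'n::finite cvec). c *s v)"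
proof -
  have "bilinear (\<lambda>(c::complex) (v::'n cvec). c *s v)"
    unfolding bilinear_def by (auto intro!: linearI simp: vec_eq_iff algebra_simps)
  then show ?thesis
    using bilinear_conv_bounded_bilinear by blast
qed

lemmas bounded_linear_vector_smult_left = bounded_bilinear.bounded_linear_right[OF bounded_bilinear_vector_smult]
lemmas bounded_linear_vector_smult_right = bounded_bilinear.bounded_linear_left[OF bounded_bilinear_vector_smult]

lemma bihom_frechet_derivative_scale:
  assumes w: "smooth_on punct w" "bihom p q w" and z: "z \<noteq> 0" and c: "c \<noteq> 0"
  shows "frechet_derivative w (at (c *s z)) (c *s v) = c powi p * cnj c powi q * frechet_derivative w (at z) v"
proof -
  let ?K = "c powi p * cnj c powi q"
  have d1: "((\<lambda>x. w (c *s x)) has_derivative (\<lambda>v. frechet_derivative w (at (c *s z)) (c *s v))) (at z)"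
    using has_derivative_compose[OF bounded_linear_imp_has_derivative[OF bounded_linear_vector_smult_left]
        smooth_on_has_derivative[OF open_punct w(1)]] z c by simp
  have d2: "((\<lambda>x. ?K * w x) has_derivative (\<lambda>v. ?K * frechet_derivative w (at z) v)) (at z)"
    using has_derivative_mult[OF has_derivative_const smooth_on_has_derivative[OF open_punct w(1)]] z
    by simp
  have eq: "?K * w x = w (c *s x)" if "x \<in> punct" for x
    using w(2) c that by (simp add: bihom_def)
  have "((\<lambda>x. w (c *s x)) has_derivative (\<lambda>v. ?K * frechet_derivative w (at z) v)) (at z)"
    using has_derivative_transform_within_open[OF d2 open_punct _ eq] z by simp
  from has_derivative_unique[OF d1 this] show ?thesis
    by metis
qed

lemma
  assumes w: "smooth_on punct w" "bihom p q w"
  shows bihom_dz: "bihom (p - 1) q (dz j w)"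
    and bihom_dzbar: "bihom p (q - 1) (dzbar j w)"
proof -
  have "dz j w (c *s z) = c powi (p - 1) * cnj c powi q * dz j w z \<and>
        dzbar j w (c *s z) = c powi p * cnj c powi (q - 1) * dzbar j w z"
    if z: "z \<noteq> 0" and c: "c \<noteq> 0" for z c
  proof -
    let ?K = "c powi p * cnj c powi q"
    let ?A = "dz j w z" and ?B = "dzbar j w z" and ?A' = "dz j w (c *s z)" and ?B' = "dzbar j w (c *s z)"
    have "?K * (m * ?A + cnj m * ?B) = (c * m) * ?A' + cnj (c * m) * ?B'" for m
    proof -
      have "c *s axis j m = axis j (c * m)"
        by (simp add: vec_eq_iff axis_def)
      then show ?thesis
        using bihom_frechet_derivative_scale[OF w z c, of "axis j m"] z c
          derivative_axis_eq_Wirtinger[OF smooth_on_has_derivative[OF open_punct w(1)], of _ j]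
        by simp
    qed
    from this[of 1] this[of \<i>]
    have "?K * (?A + ?B) = c * ?A' + cnj c * ?B'"
      "?K * (\<i> * ?A - \<i> * ?B) = \<i> * c * ?A' - \<i> * cnj c * ?B'"
      by (simp_all add: algebra_simps)
    moreover have "\<i> * \<i> = (-1::complex)"
      by simp
    ultimately have "c * ?A' = ?K * ?A" "cnj c * ?B' = ?K * ?B"
      by algebra+
    then show ?thesis
      using c by (simp add: power_int_diff field_simps)
  qed
  then show "bihom (p - 1) q (dz j w)" "bihom p (q - 1) (dzbar j w)"
    by (auto simp: bihom_def)
qed

lemma bihom_add: "bihom p q a \<Longrightarrow> bihom p q b \<Longrightarrow> bihom p q (\<lambda>x. a x + b x)"
  by (simp add: bihom_def algebra_simps)

lemma bihom_cmult: "bihom p q a \<Longrightarrow> bihom p q (\<lambda>x. k * a x)"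
  by (simp add: bihom_def algebra_simps)

lemma bihom_zero: "bihom p q (\<lambda>x. 0)"
  by (simp add: bihom_def)

lemma bihom_sum: "finite I \<Longrightarrow> (\<And>i. i \<in> I \<Longrightarrow> bihom p q (a i)) \<Longrightarrow> bihom p q (\<lambda>x. \<Sum>i\<in>I. a i x)"
  by (induction I rule: finite_induct) (auto intro: bihom_add bihom_zero)

lemma bihom_mult: "bihom p q a \<Longrightarrow> bihom p' q' b \<Longrightarrow> bihom (p + p') (q + q') (\<lambda>x. a x * b x)"
  by (simp add: bihom_def power_int_add algebra_simps)

lemma bihom_Re:
  fixes h :: "'n::finite cvec \<Rightarrow> complex"
  assumes "bihom p p h"
  shows "bihom p p (\<lambda>x. complex_of_real (Re (h x)))"
  unfolding bihom_def
proof (intro allI impI)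
  fix z :: "'n cvec" and c :: complex
  assume "z \<noteq> 0 \<and> c \<noteq> 0"
  moreover have r: "c powi p * cnj c powi p = complex_of_real ((cmod (c powi p))\<^sup>2)"
    by (subst complex_norm_square) simp
  ultimately have "h (c *s z) = complex_of_real ((cmod (c powi p))\<^sup>2) * h z"
    using assms by (simp add: bihom_def)
  then show "complex_of_real (Re (h (c *s z))) = c powi p * cnj c powi p * complex_of_real (Re (h z))"
    using r by simp
qed

lemma Lc_vector_smult: "Lc (c *s z) = c * cnj c * Lc z"
  by (simp add: Lc_eq_sum sum_distrib_left algebra_simps)

lemma bihom_Lc_power: "bihom (int m) (int m) (\<lambda>x. Lc x ^ m)"
  by (simp add: bihom_def Lc_vector_smult power_mult_distrib)

lemma bihom_Lap:
  assumes "smooth_on punct w" "bihom p q w"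
  shows "bihom (p - 1) (q - 1) (Lap w)"
proof -
  have "bihom (p - 1) (q - 1) (dz i (dzbar i w))" for i
    using bihom_dz[OF smooth_on_dzbar[OF open_punct assms(1)] bihom_dzbar[OF assms]] .
  then have "bihom (p - 1) (q - 1) (\<lambda>z. \<Sum>i\<in>UNIV. Lsign i * dz i (dzbar i w) z)"
    by (intro bihom_sum bihom_cmult) auto
  then show ?thesis
    by (simp add: Lap_eq_Lsign_sum[abs_def])
qed

lemma smooth_on_funpow_Lap: "smooth_on punct w \<Longrightarrow> smooth_on punct ((Lap ^^ m) w)"
  by (induction m) (auto intro: smooth_on_Lap open_punct)

lemma bihom_funpow_Lap:
  "smooth_on punct w \<Longrightarrow> bihom p q w \<Longrightarrow> bihom (p - int m) (q - int m) ((Lap ^^ m) w)"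
proof (induction m)
  case 0
  then show ?case by simp
next
  case (Suc m)
  then have "bihom (p - int m - 1) (q - int m - 1) (Lap ((Lap ^^ m) w))"
    by (intro bihom_Lap smooth_on_funpow_Lap) auto
  then show ?case
    by (simp add: algebra_simps)
qed

lemma frechet_derivative_radial:
  assumes w: "smooth_on punct w" "bihom p q w" and z: "z \<noteq> 0"
  shows "frechet_derivative w (at z) (h *s z) = (h * of_int p + cnj h * of_int q) * w z"
proof -
  have d1: "((\<lambda>c. w (c *s z)) has_derivative (\<lambda>h. frechet_derivative w (at z) (h *s z))) (at 1)"
    using has_derivative_compose[OF bounded_linear_imp_has_derivative[OF bounded_linear_vector_smult_right[of z], of "at 1"]
        smooth_on_has_derivative[OF open_punct w(1), of "1 *s z"]] z by simp
  have dp: "((\<lambda>c. c powi p) has_derivative (\<lambda>h. h * of_int p)) (at (1::complex))"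
    using has_derivative_power_int'[of "1::complex" p UNIV] by simp
  have dq: "((\<lambda>c. cnj c powi q) has_derivative (\<lambda>h. cnj h * of_int q)) (at (1::complex))"
    using has_derivative_power_int[of cnj 1 "\<lambda>h. cnj h" UNIV q] has_derivative_cnj[OF has_derivative_ident]
    by simp
  have d2: "((\<lambda>c. c powi p * cnj c powi q * w z) has_derivative (\<lambda>h. (h * of_int p + cnj h * of_int q) * w z)) (at 1)"
    using has_derivative_mult[OF has_derivative_mult[OF dp dq] has_derivative_const[of "w z"]]
    by (simp add: algebra_simps)
  have eq: "c powi p * cnj c powi q * w z = w (c *s z)" if "c \<in> -{0}" for c
    using w(2) z that by (simp add: bihom_def)
  have "((\<lambda>c. w (c *s z)) has_derivative (\<lambda>h. (h * of_int p + cnj h * of_int q) * w z)) (at 1)"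
    using has_derivative_transform_within_open[OF d2 open_Compl[OF closed_singleton[of "0::complex"]] _ eq] by simp
  from has_derivative_unique[OF d1 this] show ?thesis
    by metis
qed

lemma
  assumes w: "smooth_on punct w" "bihom p q w" and z: "z \<noteq> 0"
  shows bihom_Euler_dz: "(\<Sum>i\<in>UNIV. z $ i * dz i w z) = of_int p * w z"
    and bihom_Euler_dzbar: "(\<Sum>i\<in>UNIV. cnj (z $ i) * dzbar i w z) = of_int q * w z"
proof -
  note D = smooth_on_has_derivative[OF open_punct w(1), of z, simplified, OF z]
  let ?A = "\<Sum>i\<in>UNIV. z $ i * dz i w z" and ?B = "\<Sum>i\<in>UNIV. cnj (z $ i) * dzbar i w z"
  have e1: "?A + ?B = (of_int p + of_int q) * w z"
    using frechet_derivative_radial[OF assms, of 1] derivative_eq_Wirtinger_sum[OF D, of "1 *s z"]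
    by (simp add: sum.distrib)
  have e2: "\<i> * ?A - \<i> * ?B = (\<i> * of_int p - \<i> * of_int q) * w z"
    using frechet_derivative_radial[OF assms, of \<i>] derivative_eq_Wirtinger_sum[OF D, of "\<i> *s z"]
    by (simp add: sum.distrib sum_distrib_left sum_subtractf algebra_simps)
  have ii: "\<i> * \<i> = (-1::complex)"
    by simp
  show "?A = of_int p * w z" using e1 e2 ii by algebra
  show "?B = of_int q * w z" using e1 e2 ii by algebra
qed

lemma smooth_on_Lc_mult: "smooth_on punct w \<Longrightarrow> smooth_on punct (\<lambda>x. Lc x * w x)"
  by (intro smooth_on_mult open_punct smooth_on_Lc)

lemma dz_dzbar_Lc_mult:
  assumes w: "smooth_on punct w" and z: "z \<noteq> 0"
  shows "dz i (dzbar i (\<lambda>x. Lc x * w x)) z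
    = Lsign i * (w z + z $ i * dz i w z) + Lsign i * cnj (z $ i) * dzbar i w z + Lc z * dz i (dzbar i w) z"
proof -
  note op = open_punct
  have dw: "w differentiable (at x)" if "x \<noteq> 0" for x
    using smooth_on_differentiable[OF op w(1)] that by simp
  have sdb: "smooth_on punct (dzbar i w)"
    using smooth_on_dzbar[OF op w(1)] .
  define H where "H x = Lsign i * (x $ i * w x) + Lc x * dzbar i w x" for x
  have sH: "smooth_on punct H"
    unfolding H_def[abs_def]
    by (intro smooth_on_add[OF op] smooth_on_mult[OF op] smooth_on_const[OF op] smooth_on_vec_nth[OF op]
        w(1) smooth_on_Lc[OF op] sdb)
  have "dzbar i (\<lambda>x. Lc x * w x) x = H x" if "x \<in> punct" for x
    using dzbar_mult[OF differentiable_Lc dw, of x i] that by (simp add: dzbar_Lc H_def algebra_simps)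
  from dz_transform_within_open[OF op _ this sH] z
  have "dz i (dzbar i (\<lambda>x. Lc x * w x)) z = dz i H z"
    by simp
  also have "\<dots> = dz i (\<lambda>x. Lsign i * (x $ i * w x)) z + dz i (\<lambda>x. Lc x * dzbar i w x) z"
    unfolding H_def
    by (rule dz_add) (intro differentiable_mult differentiable_const differentiable_vec_nth dw z
        differentiable_Lc smooth_on_differentiable[OF op sdb] in_punct[THEN iffD2])+
  also have "dz i (\<lambda>x. Lsign i * (x $ i * w x)) z = Lsign i * (w z + z $ i * dz i w z)"
    using dz_cmult[of "\<lambda>x. x $ i * w x" z i "Lsign i"] dz_mult[OF differentiable_vec_nth(1) dw[OF z], of i i]
      differentiable_mult[OF differentiable_vec_nth(1) dw[OF z]]
    by (simp add: dz_vec_nth)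
  also have "dz i (\<lambda>x. Lc x * dzbar i w x) z = Lsign i * cnj (z $ i) * dzbar i w z + Lc z * dz i (dzbar i w) z"
    using dz_mult[OF differentiable_Lc smooth_on_differentiable[OF op sdb], of z i] z by (simp add: dz_Lc)
  finally show ?thesis
    by simp
qed

text \<open>The constant \<open>n + 1 + p + q\<close> comes from \<open>dz i (dzbar i Lc) = Lsign i\<close>, summed over the
  \<open>n + 1\<close> coordinates, together with Euler's identities for \<open>w\<close>.\<close>

lemma Lap_Lc_mult:
  fixes w :: "'n::finite cvec \<Rightarrow> complex"
  assumes w: "smooth_on punct w" "bihom p q w" and z: "z \<noteq> 0"
  shows "Lap (\<lambda>x. Lc x * w x) z = Lc z * Lap w z + (of_nat CARD('n) + 1 + of_int p + of_int q) * w z"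
proof -
  have "Lap (\<lambda>x. Lc x * w x) z = (\<Sum>i\<in>UNIV. Lsign i * dz i (dzbar i (\<lambda>x. Lc x * w x)) z)"
    by (simp add: Lap_eq_Lsign_sum)
  also have "\<dots> = (\<Sum>i\<in>UNIV. w z + (z $ i * dz i w z + (cnj (z $ i) * dzbar i w z
      + Lc z * (Lsign i * dz i (dzbar i w) z))))"
    unfolding dz_dzbar_Lc_mult[OF w(1) z]
    by (rule sum.cong) (simp_all add: distrib_left mult.assoc mult.left_commute[of "Lsign _" "Lc z"] add.assoc)
  also have "\<dots> = (of_nat CARD('n) + 1) * w z + of_int p * w z + of_int q * w z + Lc z * Lap w z"
  proof -
    have "(\<Sum>i\<in>(UNIV :: 'n option set). w z) = (of_nat CARD('n) + 1) * w z"
      by (simp add: sum_UNIV_option algebra_simps)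
    then show ?thesis
      by (simp add: sum.distrib bihom_Euler_dz[OF w z] bihom_Euler_dzbar[OF w z]
          Lap_eq_Lsign_sum sum_distrib_left)
  qed
  finally show ?thesis
    by (simp add: algebra_simps)
qed

lemma funpow_Lap_transform_within_punct:
  assumes "smooth_on punct G" "smooth_on punct H" "\<And>x. x \<noteq> 0 \<Longrightarrow> G x = H x" "z \<noteq> 0"
  shows "(Lap ^^ m) G z = (Lap ^^ m) H z"
  using assms(4)
proof (induction m arbitrary: z)
  case 0
  then show ?case using assms(3) by simp
next
  case (Suc m)
  have "(Lap ^^ m) G x = (Lap ^^ m) H x" if "x \<in> punct" for x
    using Suc.IH that by simp
  from Lap_transform_within_open[OF open_punct _ this smooth_on_funpow_Lap[OF assms(2)]]
  show ?case
    using Suc.prems by simp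
qed

lemma funpow_Lap_add:
  assumes "smooth_on punct G" "smooth_on punct H" "z \<noteq> 0"
  shows "(Lap ^^ m) (\<lambda>x. G x + H x) z = (Lap ^^ m) G z + (Lap ^^ m) H z"
  using assms(3)
proof (induction m arbitrary: z)
  case 0
  then show ?case by simp
next
  case (Suc m)
  have s: "smooth_on punct (\<lambda>x. (Lap ^^ m) G x + (Lap ^^ m) H x)"
    by (intro smooth_on_add[OF open_punct] smooth_on_funpow_Lap assms)
  have "(Lap ^^ m) (\<lambda>x. G x + H x) x = (Lap ^^ m) G x + (Lap ^^ m) H x" if "x \<in> punct" for x
    using Suc.IH that by simp
  from Lap_transform_within_open[OF open_punct _ this s]
  have "(Lap ^^ Suc m) (\<lambda>x. G x + H x) z = Lap (\<lambda>x. (Lap ^^ m) G x + (Lap ^^ m) H x) z"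
    using Suc.prems by simp
  also have "\<dots> = (Lap ^^ Suc m) G z + (Lap ^^ Suc m) H z"
    using Lap_add[OF open_punct _ smooth_on_funpow_Lap[OF assms(1)] smooth_on_funpow_Lap[OF assms(2)]] Suc
    by simp
  finally show ?case .
qed

lemma funpow_Lap_Lc_mult:
  fixes w :: "'n::finite cvec \<Rightarrow> complex"
  assumes w: "smooth_on punct w" "bihom p q w" and z: "z \<noteq> 0"
  shows "(Lap ^^ Suc m) (\<lambda>x. Lc x * w x) z = Lc z * (Lap ^^ Suc m) w z
      + of_nat (Suc m) * (of_nat CARD('n) + 1 + of_int p + of_int q - of_nat m) * (Lap ^^ m) w z"
  using z
proof (induction m arbitrary: z)
  case 0
  then show ?case using Lap_Lc_mult[OF w] by (simp add: algebra_simps)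
next
  case (Suc m)
  let ?a = "of_nat (Suc m) * (of_nat CARD('n) + 1 + of_int p + of_int q - of_nat m) :: complex"
  let ?W1 = "(Lap ^^ Suc m) w" and ?W0 = "(Lap ^^ m) w"
  have s1: "smooth_on punct ?W1" and s0: "smooth_on punct ?W0"
    using smooth_on_funpow_Lap[OF w(1)] by blast+
  have h1: "bihom (p - int (Suc m)) (q - int (Suc m)) ?W1"
    using bihom_funpow_Lap[OF w] by blast
  have s0': "smooth_on punct (\<lambda>x. ?a * ?W0 x)"
    by (intro smooth_on_mult[OF open_punct] smooth_on_const[OF open_punct] s0)
  have "(Lap ^^ Suc m) (\<lambda>x. Lc x * w x) x = Lc x * ?W1 x + ?a * ?W0 x" if "x \<in> punct" for x
    using Suc.IH that by simp
  from Lap_transform_within_open[OF open_punct _ this smooth_on_add[OF open_punct smooth_on_Lc_mult[OF s1] s0']]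
  have "(Lap ^^ Suc (Suc m)) (\<lambda>x. Lc x * w x) z = Lap (\<lambda>x. Lc x * ?W1 x + ?a * ?W0 x) z"
    using Suc.prems by simp
  also have "\<dots> = Lap (\<lambda>x. Lc x * ?W1 x) z + ?a * Lap ?W0 z"
    using Lap_add[OF open_punct _ smooth_on_Lc_mult[OF s1] s0'] Lap_cmult[OF open_punct _ s0] Suc.prems
    by simp
  also have "\<dots> = Lc z * Lap ?W1 z
      + (of_nat CARD('n) + 1 + of_int (p - int (Suc m)) + of_int (q - int (Suc m))) * ?W1 z + ?a * ?W1 z"
    using Lap_Lc_mult[OF s1 h1 Suc.prems] by simp
  finally show ?case
    by (simp add: algebra_simps)
qed

lemma Lap_Lc_power_mult:
  fixes g :: "'n::finite cvec \<Rightarrow> complex"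
  assumes g: "smooth_on punct g" "bihom p q g" and z: "z \<noteq> 0"
  shows "Lap (\<lambda>x. Lc x ^ Suc j * g x) z = Lc z ^ Suc j * Lap g z
      + of_nat (Suc j) * (of_nat CARD('n) + of_nat (Suc j) + of_int p + of_int q) * Lc z ^ j * g z"
proof (induction j)
  case 0
  show ?case using Lap_Lc_mult[OF g z] by (simp add: algebra_simps)
next
  case (Suc j)
  let ?G = "\<lambda>x. Lc x ^ Suc j * g x"
  have sG: "smooth_on punct ?G"
    by (intro smooth_on_mult[OF open_punct] g(1) smooth_on_power[OF open_punct] smooth_on_Lc[OF open_punct])
  have hG: "bihom (int (Suc j) + p) (int (Suc j) + q) ?G"
    using bihom_mult[OF bihom_Lc_power g(2)] .
  have "Lap (\<lambda>x. Lc x ^ Suc (Suc j) * g x) z = Lap (\<lambda>x. Lc x * ?G x) z"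
    by (simp add: mult.assoc)
  also have "\<dots> = Lc z * Lap ?G z + (of_nat CARD('n) + 1 + of_int (int (Suc j) + p) + of_int (int (Suc j) + q)) * ?G z"
    using Lap_Lc_mult[OF sG hG z] .
  finally show ?case
    using Suc.IH by (simp add: algebra_simps)
qed

lemma funpow_Lap_Lc_power_mult_nullcone:
  fixes h :: "'n::finite cvec \<Rightarrow> complex"
  assumes h: "smooth_on punct h" "bihom (- int CARD('n)) (- int CARD('n)) h" and z: "z \<in> nullcone"
  shows "(Lap ^^ s) (\<lambda>x. Lc x ^ s * h x) z = (\<Prod>t\<in>{1..s}. of_nat t * (of_nat t - of_nat CARD('n))) * h z"
proof (induction s)
  case 0
  then show ?case by simp
next
  case (Suc s)
  let ?n = "CARD('n)"
  let ?W = "\<lambda>x. Lc x ^ s * h x"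
  have sW: "smooth_on punct ?W"
    by (intro smooth_on_mult[OF open_punct] smooth_on_power[OF open_punct] smooth_on_Lc[OF open_punct] h(1))
  have hW: "bihom (int s + - int ?n) (int s + - int ?n) ?W"
    using bihom_mult[OF bihom_Lc_power h(2)] .
  have z0: "z \<noteq> 0" and Lz: "Lc z = 0"
    using z by (auto simp: nullcone_def Lc_def)
  have "(Lap ^^ Suc s) (\<lambda>x. Lc x ^ Suc s * h x) z = (Lap ^^ Suc s) (\<lambda>x. Lc x * ?W x) z"
    by (simp add: mult.assoc)
  also have "\<dots> = of_nat (Suc s) * (of_nat (Suc s) - of_nat ?n) * (Lap ^^ s) ?W z"
    using funpow_Lap_Lc_mult[OF sW hW z0, of s] Lz by (simp add: algebra_simps)
  finally show ?case
    using Suc.IH by (simp add: prod.cl_ivl_Suc algebra_simps)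
qed

section \<open>Symmetry of second derivatives and reality of \<open>\<Delta>\<close>\<close>

lemma has_derivative_along_line:
  fixes F :: "'a::real_normed_vector \<Rightarrow> real"
  assumes "(F has_derivative D) (at (a + s *\<^sub>R u))"
  shows "((\<lambda>s. F (a + s *\<^sub>R u)) has_derivative (\<lambda>h. h * D u)) (at s within X)"
proof -
  have "((\<lambda>s. a + s *\<^sub>R u) has_derivative (\<lambda>h. h *\<^sub>R u)) (at s within X)"
    by (auto intro!: derivative_eq_intros)
  from has_derivative_compose[OF this assms] show ?thesis
    by (simp add: linear_scale[OF has_derivative_linear[OF assms]])
qed

lemma second_difference_mean_value:
  fixes F :: "'a::real_normed_vector \<Rightarrow> real"
  assumes dF: "\<And>x. x \<in> S \<Longrightarrow> (F has_derivative DF x) (at x)"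
    and dG: "\<And>x. x \<in> S \<Longrightarrow> ((\<lambda>y. DF y u) has_derivative DG x) (at x)"
    and t: "0 < t" and sq: "\<And>s r. s \<in> {0..t} \<Longrightarrow> r \<in> {0..t} \<Longrightarrow> z + s *\<^sub>R u + r *\<^sub>R v \<in> S"
  shows "\<exists>\<sigma>\<in>{0..t}. \<exists>\<tau>\<in>{0..t}. F (z + t *\<^sub>R u + t *\<^sub>R v) - F (z + t *\<^sub>R u) - F (z + t *\<^sub>R v) + F z
           = t * t * DG (z + \<sigma> *\<^sub>R u + \<tau> *\<^sub>R v) v"
proof -
  define \<psi> where "\<psi> s = F ((z + t *\<^sub>R v) + s *\<^sub>R u) - F (z + s *\<^sub>R u)" for s
  have d\<psi>: "(\<psi> has_derivative (\<lambda>h. h * (DF ((z + t *\<^sub>R v) + s *\<^sub>R u) u - DF (z + s *\<^sub>R u) u)))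
      (at s within {0..t})" if "0 \<le> s" "s \<le> t" for s
  proof -
    have m1: "z + t *\<^sub>R v + s *\<^sub>R u \<in> S" and m2: "z + s *\<^sub>R u \<in> S"
      using sq[of s t] sq[of s 0] that t by (simp_all add: algebra_simps)
    show ?thesis
      unfolding \<psi>_def
      using has_derivative_diff[OF has_derivative_along_line[OF dF[OF m1]] has_derivative_along_line[OF dF[OF m2]]]
      by (simp add: algebra_simps)
  qed
  obtain \<sigma> where \<sigma>: "\<sigma> \<in> {0..t}"
    and e1: "\<psi> t - \<psi> 0 = (t - 0) * (DF ((z + t *\<^sub>R v) + \<sigma> *\<^sub>R u) u - DF (z + \<sigma> *\<^sub>R u) u)"
    using mvt_very_simple[of 0 t \<psi>, OF _ d\<psi>] t by auto
  define chi where "chi r = DF ((z + \<sigma> *\<^sub>R u) + r *\<^sub>R v) u" for r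
  have dchi: "(chi has_derivative (\<lambda>h. h * DG ((z + \<sigma> *\<^sub>R u) + r *\<^sub>R v) v)) (at r within {0..t})"
    if "0 \<le> r" "r \<le> t" for r
  proof -
    have "z + \<sigma> *\<^sub>R u + r *\<^sub>R v \<in> S"
      using sq[of \<sigma> r] that \<sigma> by simp
    then show ?thesis
      unfolding chi_def using has_derivative_along_line[of "\<lambda>y. DF y u", OF dG] by simp
  qed
  obtain \<tau> where \<tau>: "\<tau> \<in> {0..t}" and e2: "chi t - chi 0 = (t - 0) * DG ((z + \<sigma> *\<^sub>R u) + \<tau> *\<^sub>R v) v"
    using mvt_very_simple[of 0 t chi, OF _ dchi] t by auto
  have "F (z + t *\<^sub>R u + t *\<^sub>R v) - F (z + t *\<^sub>R u) - F (z + t *\<^sub>R v) + F z = \<psi> t - \<psi> 0"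
    by (simp add: \<psi>_def algebra_simps)
  also have "\<dots> = t * (chi t - chi 0)"
    using e1 by (simp add: chi_def algebra_simps)
  also have "\<dots> = t * t * DG (z + \<sigma> *\<^sub>R u + \<tau> *\<^sub>R v) v"
    using e2 by simp
  finally show ?thesis
    using \<sigma> \<tau> by blast
qed

lemma small_square_in_ball:
  fixes u v :: "'a::real_normed_vector"
  assumes "r > 0"
  obtains t where "t > 0" "\<And>s q. s \<in> {0..t} \<Longrightarrow> q \<in> {0..t} \<Longrightarrow> dist (z + s *\<^sub>R u + q *\<^sub>R v) z < r"
proof
  define M where "M = norm u + norm v + 1"
  have M: "M > 0"
    by (simp add: M_def add_nonneg_pos)
  show "r / M > 0"
    using assms M by simp
  fix s q assume "s \<in> {0..r / M}" "q \<in> {0..r / M}"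
  then have "norm (s *\<^sub>R u + q *\<^sub>R v) \<le> r / M * norm u + r / M * norm v"
    using norm_triangle_ineq[of "s *\<^sub>R u" "q *\<^sub>R v"] mult_right_mono[of s "r / M" "norm u"]
      mult_right_mono[of q "r / M" "norm v"]
    by simp
  also have "\<dots> = r * ((norm u + norm v) / M)"
    by (simp add: field_simps add_divide_distrib)
  also have "\<dots> < r * 1"
    using assms M by (intro mult_strict_left_mono) (simp_all add: M_def divide_less_eq_1)
  finally show "dist (z + s *\<^sub>R u + q *\<^sub>R v) z < r"
    by (simp add: dist_norm)
qed

lemma symmetric_second_derivative:
  fixes F :: "'a::real_normed_vector \<Rightarrow> real"
  assumes S: "open S" "z \<in> S"
    and dF: "\<And>x. x \<in> S \<Longrightarrow> (F has_derivative DF x) (at x)"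
    and dGu: "\<And>x. x \<in> S \<Longrightarrow> ((\<lambda>y. DF y u) has_derivative DGu x) (at x)"
    and dGv: "\<And>x. x \<in> S \<Longrightarrow> ((\<lambda>y. DF y v) has_derivative DGv x) (at x)"
    and cu: "continuous (at z) (\<lambda>x. DGu x v)"
    and cv: "continuous (at z) (\<lambda>x. DGv x u)"
  shows "DGu z v = DGv z u"
proof (rule ccontr)
  assume "DGu z v \<noteq> DGv z u"
  define \<epsilon> where "\<epsilon> = \<bar>DGu z v - DGv z u\<bar> / 3"
  have \<epsilon>: "\<epsilon> > 0"
    using \<open>DGu z v \<noteq> DGv z u\<close> by (simp add: \<epsilon>_def)
  obtain d1 where d1: "d1 > 0" "\<And>x. dist x z < d1 \<Longrightarrow> dist (DGu x v) (DGu z v) < \<epsilon>"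
    using cu \<epsilon> unfolding continuous_at_eps_delta by blast
  obtain d2 where d2: "d2 > 0" "\<And>x. dist x z < d2 \<Longrightarrow> dist (DGv x u) (DGv z u) < \<epsilon>"
    using cv \<epsilon> unfolding continuous_at_eps_delta by blast
  obtain r where r: "r > 0" "ball z r \<subseteq> S"
    using S open_contains_ball by blast
  have "min r (min d1 d2) > 0"
    using r d1 d2 by simp
  then obtain t where t: "t > 0"
    and close: "\<And>s q. s \<in> {0..t} \<Longrightarrow> q \<in> {0..t} \<Longrightarrow> dist (z + s *\<^sub>R u + q *\<^sub>R v) z < min r (min d1 d2)"
    using small_square_in_ball by blast
  have sq1: "z + s *\<^sub>R u + q *\<^sub>R v \<in> S" if "s \<in> {0..t}" "q \<in> {0..t}" for s q
    using close[OF that] r(2) by (auto simp: dist_commute)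
  have sq2: "z + s *\<^sub>R v + q *\<^sub>R u \<in> S" if "s \<in> {0..t}" "q \<in> {0..t}" for s q
    using sq1[OF that(2,1)] by (simp add: algebra_simps)
  obtain \<sigma> \<tau> where st: "\<sigma> \<in> {0..t}" "\<tau> \<in> {0..t}"
    and A: "F (z + t *\<^sub>R u + t *\<^sub>R v) - F (z + t *\<^sub>R u) - F (z + t *\<^sub>R v) + F z
      = t * t * DGu (z + \<sigma> *\<^sub>R u + \<tau> *\<^sub>R v) v"
    using second_difference_mean_value[OF dF dGu t sq1] by blast
  obtain \<sigma>' \<tau>' where st': "\<sigma>' \<in> {0..t}" "\<tau>' \<in> {0..t}"
    and B: "F (z + t *\<^sub>R v + t *\<^sub>R u) - F (z + t *\<^sub>R v) - F (z + t *\<^sub>R u) + F z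
      = t * t * DGv (z + \<sigma>' *\<^sub>R v + \<tau>' *\<^sub>R u) u"
    using second_difference_mean_value[OF dF dGv t sq2] by blast
  have "t * t * DGu (z + \<sigma> *\<^sub>R u + \<tau> *\<^sub>R v) v = t * t * DGv (z + \<sigma>' *\<^sub>R v + \<tau>' *\<^sub>R u) u"
    using A B by (simp add: algebra_simps)
  then have eq: "DGu (z + \<sigma> *\<^sub>R u + \<tau> *\<^sub>R v) v = DGv (z + \<tau>' *\<^sub>R u + \<sigma>' *\<^sub>R v) u"
    using t by (simp add: algebra_simps)
  have "dist (DGu (z + \<sigma> *\<^sub>R u + \<tau> *\<^sub>R v) v) (DGu z v) < \<epsilon>"
    using d1(2) close[OF st] by simp
  moreover have "dist (DGv (z + \<tau>' *\<^sub>R u + \<sigma>' *\<^sub>R v) u) (DGv z u) < \<epsilon>"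
    using d2(2) close[OF st'(2,1)] by simp
  ultimately have "\<bar>DGu z v - DGv z u\<bar> < 2 * \<epsilon>"
    using eq by (simp add: dist_real_def)
  then show False
    using \<epsilon> by (simp add: \<epsilon>_def)
qed

lemma smooth_on_second_derivative_symmetric:
  fixes F :: "'a::real_normed_vector \<Rightarrow> real"
  assumes S: "open S" and sF: "smooth_on S F" and z: "z \<in> S"
  shows "frechet_derivative (\<lambda>x. frechet_derivative F (at x) u) (at z) v
    = frechet_derivative (\<lambda>x. frechet_derivative F (at x) v) (at z) u"
proof (rule symmetric_second_derivative[OF S z, where DF = "\<lambda>x. frechet_derivative F (at x)"])
  have su: "smooth_on S (\<lambda>x. frechet_derivative F (at x) u)"
    and sv: "smooth_on S (\<lambda>x. frechet_derivative F (at x) v)"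
    using smooth_on_frechet_derivative[OF S sF] by blast+
  show "(F has_derivative frechet_derivative F (at x)) (at x)" if "x \<in> S" for x
    using smooth_on_has_derivative[OF S sF that] .
  show "((\<lambda>y. frechet_derivative F (at y) u) has_derivative
      frechet_derivative (\<lambda>x. frechet_derivative F (at x) u) (at x)) (at x)"
    "((\<lambda>y. frechet_derivative F (at y) v) has_derivative
      frechet_derivative (\<lambda>x. frechet_derivative F (at x) v) (at x)) (at x)"
    if "x \<in> S" for x
    using smooth_on_has_derivative[OF S su that] smooth_on_has_derivative[OF S sv that] by blast+
  show "continuous (at z) (\<lambda>x. frechet_derivative (\<lambda>x. frechet_derivative F (at x) u) (at x) v)"
    "continuous (at z) (\<lambda>x. frechet_derivative (\<lambda>x. frechet_derivative F (at x) v) (at x) u)"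
    using smooth_on_continuous_at[OF S smooth_on_frechet_derivative[OF S] z] su sv by blast+
qed

lemma Im_dz_dzbar_of_real:
  fixes F :: "'n::finite cvec \<Rightarrow> real"
  assumes S: "open S" and sF: "smooth_on S F" and z: "z \<in> S"
  shows "Im (dz i (dzbar i (\<lambda>x. complex_of_real (F x))) z) = 0"
proof -
  define e :: "'n cvec" where "e = axis i 1"
  define ie :: "'n cvec" where "ie = axis i \<i>"
  define a where "a x = frechet_derivative F (at x) e" for x
  define b where "b x = frechet_derivative F (at x) ie" for x
  have sa: "smooth_on S a" and sb: "smooth_on S b"
    unfolding a_def[abs_def] b_def[abs_def] using smooth_on_frechet_derivative[OF S sF] by blast+
  define H where "H x = (complex_of_real (a x) + \<i> * complex_of_real (b x)) / 2" for x
  have sH: "smooth_on S H"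
    unfolding H_def[abs_def]
    by (intro smooth_on_linear[OF S bounded_linear_divide] smooth_on_add[OF S]
        smooth_on_mult[OF S] smooth_on_const[OF S] smooth_on_linear[OF S bounded_linear_of_real] sa sb)
  have "dzbar i (\<lambda>x. complex_of_real (F x)) x = H x" if "x \<in> S" for x
    using dzbar_eq_derivative[OF bounded_linear.has_derivative[OF bounded_linear_of_real
          smooth_on_has_derivative[OF S sF that]]]
    by (simp add: H_def a_def b_def e_def ie_def)
  then have "dz i (dzbar i (\<lambda>x. complex_of_real (F x))) z = dz i H z"
    using dz_transform_within_open[OF S z _ sH] by blast
  also have "\<dots> = ((frechet_derivative a (at z) e + frechet_derivative b (at z) ie)
      + \<i> * (frechet_derivative b (at z) e - frechet_derivative a (at z) ie)) / 4"
  proof -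
    note da = bounded_linear.has_derivative[OF bounded_linear_of_real smooth_on_has_derivative[OF S sa z]]
    note db = bounded_linear.has_derivative[OF bounded_linear_of_real smooth_on_has_derivative[OF S sb z]]
    have "(H has_derivative (\<lambda>h. (complex_of_real (frechet_derivative a (at z) h)
        + \<i> * complex_of_real (frechet_derivative b (at z) h)) / 2)) (at z)"
      unfolding H_def[abs_def]
      by (intro derivative_eq_intros da db)
        (auto intro: smooth_on_has_derivative[OF S sa z] smooth_on_has_derivative[OF S sb z])
    then show ?thesis
      by (simp add: dz_eq_derivative e_def ie_def field_simps)
  qed
  also have "frechet_derivative a (at z) ie = frechet_derivative b (at z) e"
    unfolding a_def[abs_def] b_def[abs_def] by (rule smooth_on_second_derivative_symmetric[OF S sF z])
  finally have "dz i (dzbar i (\<lambda>x. complex_of_real (F x))) z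
      = (frechet_derivative a (at z) e + frechet_derivative b (at z) ie) / 4"
    by simp
  then show ?thesis
    by (simp only:) (simp add: Im_divide)
qed

lemma Im_Lap_of_real:
  fixes F :: "'n::finite cvec \<Rightarrow> real"
  assumes "open S" "smooth_on S F" "z \<in> S"
  shows "Im (Lap (\<lambda>x. complex_of_real (F x)) z) = 0"
proof -
  have "Im (Lsign i * dz i (dzbar i (\<lambda>x. complex_of_real (F x))) z) = 0" for i
    using Im_dz_dzbar_of_real[OF assms] by (cases i) (auto simp: Lsign_def)
  then show ?thesis
    by (simp add: Lap_eq_Lsign_sum Im_sum)
qed

section \<open>Homogeneous extensions\<close>

definition rho0 :: "'n::finite cvec \<Rightarrow> real" where
  "rho0 z = (cmod (z $ None))\<^sup>2"

definition rho1 :: "'n::finite cvec \<Rightarrow> real" where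
  "rho1 z = (\<Sum>j\<in>UNIV. (cmod (z $ Some j))\<^sup>2)"

lemma Lform_eq_rho: "Lform z = rho0 z - rho1 z"
  by (simp add: Lform_def rho0_def rho1_def)

lemma rho_nonneg: "0 \<le> rho0 z" "0 \<le> rho1 z"
  by (simp_all add: rho0_def rho1_def sum_nonneg)

lemma rho_vector_smult:
  "rho0 (c *s z) = (cmod c)\<^sup>2 * rho0 z" "rho1 (c *s z) = (cmod c)\<^sup>2 * rho1 z"
  by (simp_all add: rho0_def rho1_def norm_mult power_mult_distrib sum_distrib_left)

lemma rho1_pos_iff: "0 < rho1 z \<longleftrightarrow> (\<exists>j. z $ Some j \<noteq> 0)"
  by (auto simp: rho1_def sum_nonneg_eq_0_iff less_le sum_nonneg)

lemma rho_sum_pos: "z \<noteq> 0 \<Longrightarrow> 0 < rho0 z + rho1 z"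
proof -
  assume "z \<noteq> 0"
  then obtain i where i: "z $ i \<noteq> 0"
    by (auto simp: vec_eq_iff)
  show ?thesis
  proof (cases i)
    case None
    then show ?thesis using i rho_nonneg(2)[of z] by (simp add: rho0_def add_pos_nonneg)
  next
    case (Some j)
    then show ?thesis using i rho1_pos_iff[of z] rho_nonneg(1)[of z] by (auto intro: add_nonneg_pos)
  qed
qed

lemma smooth_on_rho: "open S \<Longrightarrow> smooth_on S rho0" "open S \<Longrightarrow> smooth_on S rho1"
proof -
  have sq: "(cmod a)\<^sup>2 = Re (a * cnj a)" for a
    by (simp add: cmod_power2) (simp add: power2_eq_square)
  show "open S \<Longrightarrow> smooth_on S rho0" "open S \<Longrightarrow> smooth_on S rho1"
    unfolding rho0_def[abs_def] rho1_def[abs_def] sq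
    by (intro smooth_on_linear[OF _ bounded_linear_Re] smooth_on_sum smooth_on_mult smooth_on_vec_nth; simp)+
qed

lemma smooth_on_Lform: "open S \<Longrightarrow> smooth_on S Lform"
  unfolding Lform_eq_rho[abs_def] by (intro smooth_on_diff smooth_on_rho)

lemma Lform_vector_smult: "Lform (c *s z) = (cmod c)\<^sup>2 * Lform z"
  by (simp add: Lform_eq_rho rho_vector_smult algebra_simps)

text \<open>\<open>cone_proj\<close> is constant on complex lines and multiplies each point of the null cone by a
  nonzero scalar, so composing it with any smooth extension of an \<open>f \<in> Eclass\<close> gives a homogeneous
  extension. The \<open>Lc\<close> term, along an arbitrary spatial axis \<open>Some undefined\<close>, keeps it away
  from \<open>0\<close> off the null cone.\<close>

definition cone_proj :: "'n::finite cvec \<Rightarrow> 'n cvec" where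
  "cone_proj z = complex_of_real (inverse (rho0 z + rho1 z)) *s
     (cnj (z $ None) *s z - Lc z *s axis (Some undefined) 1)"

lemma cone_proj_vector_smult:
  fixes z :: "'n::finite cvec"
  assumes "c \<noteq> 0"
  shows "cone_proj (c *s z) = cone_proj z"
proof -
  let ?k = "(cmod c)\<^sup>2" and ?e = "axis (Some undefined) 1 :: 'n cvec"
  have cc: "c * cnj c = complex_of_real ?k"
    by (rule complex_norm_square[symmetric])
  have V: "cnj ((c *s z) $ None) *s (c *s z) - Lc (c *s z) *s ?e
      = complex_of_real ?k *s (cnj (z $ None) *s z - Lc z *s ?e)"
    unfolding Lc_vector_smult cc[symmetric] by (simp add: vec_eq_iff algebra_simps)
  have R: "inverse (rho0 (c *s z) + rho1 (c *s z)) * ?k = inverse (rho0 z + rho1 z)"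
    using assms by (simp add: rho_vector_smult inverse_mult_distrib flip: distrib_left)
  have "cone_proj (c *s z)
      = complex_of_real (inverse (rho0 (c *s z) + rho1 (c *s z)) * ?k) *s (cnj (z $ None) *s z - Lc z *s ?e)"
    unfolding cone_proj_def V by (simp only: vector_smult_assoc of_real_mult)
  then show ?thesis
    unfolding R cone_proj_def .
qed

lemma cone_proj_nonzero:
  fixes z :: "'n::finite cvec"
  assumes "z \<noteq> 0"
  shows "cone_proj z \<noteq> 0"
proof
  let ?e = "axis (Some undefined) 1 :: 'n cvec"
  assume "cone_proj z = 0"
  moreover have "rho0 z + rho1 z \<noteq> 0"
    using rho_sum_pos[OF assms] by simp
  ultimately have v: "cnj (z $ None) *s z = Lc z *s ?e"
    unfolding cone_proj_def vector_mul_eq_0 by (simp flip: of_real_add)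
  then have "cnj (z $ None) * z $ None = Lc z * ?e $ None"
    by (metis vector_smult_component)
  then have "cnj (z $ None) * z $ None = 0"
    by (simp add: axis_def)
  then have "rho0 z = 0"
    by (simp add: rho0_def)
  moreover from this v have "Lc z *s ?e = 0"
    by (simp add: rho0_def)
  then have "Lc z = 0"
    by simp
  ultimately show False
    using rho_sum_pos[OF assms] by (simp add: Lc_def Lform_eq_rho)
qed

lemma cone_proj_nullcone:
  assumes "z \<in> nullcone"
  obtains c where "c \<noteq> 0" "cone_proj z = c *s z"
proof -
  have "z \<noteq> 0" "rho0 z = rho1 z" "Lc z = 0"
    using assms by (auto simp: nullcone_def Lform_eq_rho Lc_def)
  then have "z $ None \<noteq> 0"
    using rho_sum_pos by (fastforce simp: rho0_def)
  moreover have "complex_of_real (rho0 z) + complex_of_real (rho1 z) \<noteq> 0"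
    using rho_sum_pos[OF \<open>z \<noteq> 0\<close>] by (simp flip: of_real_add)
  ultimately show ?thesis
    using \<open>Lc z = 0\<close>
    by (intro that[of "complex_of_real (inverse (rho0 z + rho1 z)) * cnj (z $ None)"])
      (simp_all add: cone_proj_def vector_smult_assoc)
qed

lemma smooth_on_cone_proj: "smooth_on punct cone_proj"
proof -
  note op = open_punct
  have "rho0 z + rho1 z \<noteq> 0" if "z \<in> punct" for z
    using rho_sum_pos[of z] that by simp
  then have "smooth_on punct (\<lambda>z. inverse (rho0 z + rho1 z))"
    by (intro smooth_on_inverse op smooth_on_add smooth_on_rho)
  then show ?thesis
    unfolding cone_proj_def[abs_def]
    by (intro smooth_on_bilinear[OF op bounded_bilinear_vector_smult] smooth_on_diff[OF op]
        smooth_on_linear[OF op bounded_linear_of_real] smooth_on_vec_nth[OF op] smooth_on_id[OF op]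
        smooth_on_Lc[OF op] smooth_on_const[OF op])
qed

lemma hom_ext_exists:
  fixes f :: "'n::finite cvec \<Rightarrow> real"
  assumes "f \<in> Eclass"
  shows "\<exists>F. hom_ext f F"
proof -
  obtain g where g: "smooth_on punct g" "\<forall>\<zeta>\<in>nullcone. g \<zeta> = f \<zeta>"
    and inv: "\<forall>\<zeta>\<in>nullcone. \<forall>c::complex. c \<noteq> 0 \<longrightarrow> f (c *s \<zeta>) = f \<zeta>"
    using assms by (auto simp: Eclass_def smooth_on_N_def)
  have "smooth_on punct (\<lambda>z. g (cone_proj z))"
    by (rule smooth_on_compose[OF open_punct open_punct _ smooth_on_cone_proj g(1)])
      (auto simp: cone_proj_nonzero)
  moreover have "hom00 (\<lambda>z. g (cone_proj z))"
    by (simp add: hom00_def cone_proj_vector_smult)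
  moreover have "g (cone_proj z) = f z" if z: "z \<in> nullcone" for z
  proof -
    obtain c where c: "c \<noteq> 0" "cone_proj z = c *s z"
      using cone_proj_nullcone[OF z] .
    then have "c *s z \<in> nullcone"
      using z by (auto simp: nullcone_def Lform_vector_smult)
    then show ?thesis
      using g(2) inv z c by simp
  qed
  ultimately show ?thesis
    unfolding hom_ext_def by blast
qed

section \<open>Smoothness of parameter integrals\<close>

definition fst_partial :: "('a::real_normed_vector \<times> real \<Rightarrow> 'c::real_normed_vector) \<Rightarrow> 'a \<times> real \<Rightarrow> 'a \<Rightarrow>\<^sub>L 'c"
  where "fst_partial \<Phi> p = Blinfun (\<lambda>v. frechet_derivative \<Phi> (at p) (v, 0))"

lemma fst_partial_apply:
  assumes "open U" "smooth_on (U \<times> UNIV) \<Phi>" "p \<in> U \<times> UNIV"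
  shows "blinfun_apply (fst_partial \<Phi> p) = (\<lambda>v. frechet_derivative \<Phi> (at p) (v, 0))"
proof -
  have "bounded_linear (frechet_derivative \<Phi> (at p))"
    using smooth_on_has_derivative[OF open_Times[OF assms(1) open_UNIV] assms(2,3)]
      has_derivative_bounded_linear by blast
  then have "bounded_linear (\<lambda>v. frechet_derivative \<Phi> (at p) (v, 0))"
    using bounded_linear_compose bounded_linear_Pair[OF bounded_linear_ident bounded_linear_zero] by fastforce
  then show ?thesis
    unfolding fst_partial_def by (rule bounded_linear_Blinfun_apply)
qed

lemma continuous_on_fst_partial:
  fixes \<Phi> :: "'a::euclidean_space \<times> real \<Rightarrow> 'c::real_normed_vector"
  assumes "open U" "smooth_on (U \<times> UNIV) \<Phi>" "K \<subseteq> U \<times> UNIV"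
  shows "continuous_on K (fst_partial \<Phi>)"
proof (rule continuous_on_blinfun_componentwise)
  fix i :: 'a
  have "continuous_on (U \<times> UNIV) (\<lambda>p. frechet_derivative \<Phi> (at p) (i, 0))"
    using smooth_on_imp_continuous_on[OF smooth_on_frechet_derivative[OF open_Times[OF assms(1) open_UNIV] assms(2)]] .
  then have "continuous_on K (\<lambda>p. frechet_derivative \<Phi> (at p) (i, 0))"
    using continuous_on_subset assms(3) by blast
  then show "continuous_on K (\<lambda>p. blinfun_apply (fst_partial \<Phi> p) i)"
    by (rule continuous_on_eq) (use fst_partial_apply[OF assms(1,2)] assms(3) in auto)
qed

lemma has_derivative_integral_param_blinfun:
  fixes \<Phi> :: "'a::euclidean_space \<times> real \<Rightarrow> 'c::euclidean_space"
  assumes U: "open U" and s: "smooth_on (U \<times> UNIV) \<Phi>" and z: "z \<in> U"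
  shows "((\<lambda>x. integral (cbox 0 1) (\<lambda>t. \<Phi> (x, t))) has_derivative
          blinfun_apply (integral (cbox 0 1) (\<lambda>t. fst_partial \<Phi> (z, t)))) (at z)"
proof -
  obtain r where r: "r > 0" "ball z r \<subseteq> U"
    using U z open_contains_ball by blast
  let ?B = "ball z r"
  have W: "open (U \<times> (UNIV::real set))"
    using U by (simp add: open_Times)
  have "((\<lambda>x. integral (cbox 0 1) (\<lambda>t. \<Phi> (x, t))) has_derivative
      blinfun_apply (integral (cbox 0 1) (\<lambda>t. fst_partial \<Phi> (z, t)))) (at z within ?B)"
  proof (rule leibniz_rule[where fx = "\<lambda>x t. fst_partial \<Phi> (x, t)"])
    fix x and t :: real
    assume x: "x \<in> ?B"
    then have xt: "(x, t) \<in> U \<times> UNIV"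
      using r(2) by auto
    have "((\<lambda>x. (x, t)) has_derivative (\<lambda>v. (v, 0))) (at x within ?B)"
      by (auto intro!: derivative_eq_intros)
    from has_derivative_compose[OF this smooth_on_has_derivative[OF W s xt]]
    show "((\<lambda>x. \<Phi> (x, t)) has_derivative blinfun_apply (fst_partial \<Phi> (x, t))) (at x within ?B)"
      using fst_partial_apply[OF U s] x r(2) by auto
  next
    fix x assume x: "x \<in> ?B"
    have "continuous_on (cbox 0 1) (\<lambda>t. \<Phi> (x, t))"
      by (rule continuous_on_compose2[OF smooth_on_imp_continuous_on[OF s]])
        (use x r(2) in \<open>auto intro!: continuous_intros\<close>)
    then show "(\<lambda>t. \<Phi> (x, t)) integrable_on cbox 0 1"
      by (rule integrable_continuous)
  next
    show "continuous_on (?B \<times> cbox 0 1) (\<lambda>(x, t). fst_partial \<Phi> (x, t))"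
      using continuous_on_fst_partial[OF U s, of "?B \<times> cbox 0 1"] r(2) by auto
  qed (use r in auto)
  moreover have "at z within ?B = at z"
    by (rule at_within_open) (use r in auto)
  ultimately show ?thesis
    by simp
qed

lemma has_derivative_integral_param:
  fixes \<Phi> :: "'a::euclidean_space \<times> real \<Rightarrow> 'c::euclidean_space"
  assumes U: "open U" and s: "smooth_on (U \<times> UNIV) \<Phi>" and z: "z \<in> U"
  shows "((\<lambda>x. integral {0..1} (\<lambda>u. \<Phi> (x, u))) has_derivative
          (\<lambda>v. integral {0..1} (\<lambda>u. frechet_derivative \<Phi> (at (z, u)) (v, 0)))) (at z)"
proof -
  have "continuous_on (cbox 0 1) (\<lambda>t. fst_partial \<Phi> (z, t))"
    by (rule continuous_on_compose2[OF continuous_on_fst_partial[OF U s subset_refl]])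
      (use z in \<open>auto intro!: continuous_intros\<close>)
  then have "blinfun_apply (integral (cbox 0 1) (\<lambda>t. fst_partial \<Phi> (z, t))) v
      = integral (cbox 0 1) (\<lambda>t. blinfun_apply (fst_partial \<Phi> (z, t)) v)" for v
    by (rule blinfun_apply_integral[OF integrable_continuous])
  moreover have "integral (cbox 0 1) (\<lambda>t. blinfun_apply (fst_partial \<Phi> (z, t)) v)
      = integral {0..1} (\<lambda>u. frechet_derivative \<Phi> (at (z, u)) (v, 0))" for v
    using fst_partial_apply[OF U s] z by (simp add: cbox_interval)
  ultimately have "blinfun_apply (integral {0..1} (\<lambda>t. fst_partial \<Phi> (z, t)))
      = (\<lambda>v. integral {0..1} (\<lambda>u. frechet_derivative \<Phi> (at (z, u)) (v, 0)))"
    by (auto simp: cbox_interval)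
  then show ?thesis
    using has_derivative_integral_param_blinfun[OF assms] unfolding cbox_interval by simp
qed

lemma smooth_on_integral_param:
  fixes \<Phi> :: "'a::euclidean_space \<times> real \<Rightarrow> 'c::euclidean_space"
  assumes U: "open U" and s: "smooth_on (U \<times> UNIV) \<Phi>"
  shows "smooth_on U (\<lambda>x. integral {0..1} (\<lambda>u. \<Phi> (x, u)))"
proof -
  have W: "open (U \<times> (UNIV::real set))"
    using U by (simp add: open_Times)
  have "Ck k U (\<lambda>x. integral {0..1} (\<lambda>u. \<Phi> (x, u)))" if "smooth_on (U \<times> UNIV) \<Phi>"
    for k and \<Phi> :: "'a \<times> real \<Rightarrow> 'c"
    using that
  proof (induction k arbitrary: \<Phi>)
    case 0
    have "continuous_on U (\<lambda>x. integral {0..1} (\<lambda>u. \<Phi> (x, u)))"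
      using has_derivative_integral_param[OF U 0] has_derivative_continuous
      by (meson continuous_at_imp_continuous_on)
    then show ?case
      by simp
  next
    case (Suc k)
    show ?case
    proof (rule Ck_SucI[OF U has_derivative_integral_param[OF U Suc.prems]])
      show "Ck k U (\<lambda>x. integral {0..1} (\<lambda>u. frechet_derivative \<Phi> (at (x, u)) (v, 0)))" for v
        using Suc.IH[OF smooth_on_frechet_derivative[OF W Suc.prems]] by simp
    qed
  qed
  then show ?thesis
    using s by (simp add: smooth_on_def)
qed

section \<open>Division by \<open>L\<close>\<close>

text \<open>On the open neighbourhood \<open>cone_nbhd\<close> of the null cone, rescaling the coordinate
  \<open>\<zeta>\<^sub>0\<close> by \<open>null_scale z\<close> moves \<open>z\<close> onto the null cone, and \<open>null_segment (z, u)\<close>,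
  \<open>0 \<le> u \<le> 1\<close>, runs along that line from the null cone back to \<open>z\<close>.\<close>

definition cone_nbhd :: "'n::finite cvec set" where
  "cone_nbhd = {z. 0 < rho0 z \<and> 0 < rho1 z}"

definition null_scale :: "'n::finite cvec \<Rightarrow> real" where
  "null_scale z = sqrt (rho1 z / rho0 z)"

definition e0_part :: "'n::finite cvec \<Rightarrow> 'n cvec" where
  "e0_part z = axis None (z $ None)"

definition null_segment :: "'n::finite cvec \<times> real \<Rightarrow> 'n cvec" where
  "null_segment p = fst p + (null_scale (fst p) + snd p * (1 - null_scale (fst p)) - 1) *\<^sub>R e0_part (fst p)"

definition segment_derivative :: "('n::finite cvec \<Rightarrow> complex) \<Rightarrow> 'n cvec \<times> real \<Rightarrow> complex" where
  "segment_derivative h p = frechet_derivative h (at (null_segment p)) (e0_part (fst p))"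

definition null_quotient :: "('n::finite cvec \<Rightarrow> complex) \<Rightarrow> 'n cvec \<Rightarrow> complex" where
  "null_quotient h z = complex_of_real (inverse (rho0 z * (1 + null_scale z)))
     * integral {0..1} (\<lambda>u. segment_derivative h (z, u))"

lemma open_cone_nbhd: "open cone_nbhd"
proof -
  have "continuous_on UNIV rho0" "continuous_on UNIV rho1"
    using smooth_on_imp_continuous_on smooth_on_rho[OF open_UNIV] by blast+
  then show ?thesis
    unfolding cone_nbhd_def Collect_conj_eq
    by (intro open_Int open_Collect_less continuous_on_const)
qed

lemma nullcone_subset_cone_nbhd: "(nullcone :: 'n::finite cvec set) \<subseteq> cone_nbhd"
proof
  fix z :: "'n cvec"
  assume "z \<in> nullcone"
  then have "z \<noteq> 0" "rho0 z = rho1 z"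
    by (auto simp: nullcone_def Lform_eq_rho)
  then show "z \<in> cone_nbhd"
    using rho_sum_pos[of z] by (simp add: cone_nbhd_def)
qed

lemma cone_nbhd_subset_punct: "cone_nbhd \<subseteq> punct"
  by (auto simp: cone_nbhd_def rho0_def)

lemma smooth_on_null_scale: "smooth_on cone_nbhd null_scale"
proof -
  have "smooth_on cone_nbhd (\<lambda>z. rho1 z * inverse (rho0 z))"
    by (intro smooth_on_mult smooth_on_inverse open_cone_nbhd smooth_on_rho) (auto simp: cone_nbhd_def)
  then have "smooth_on cone_nbhd (\<lambda>z. sqrt (rho1 z * inverse (rho0 z)))"
    by (rule smooth_on_sqrt[OF open_cone_nbhd]) (simp add: cone_nbhd_def)
  then show ?thesis
    by (simp add: null_scale_def[abs_def] divide_inverse)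
qed

lemma null_scale_nonneg: "0 \<le> null_scale z"
  using rho_nonneg[of z] by (simp add: null_scale_def)

lemma smooth_on_e0_part:
  assumes "open S"
  shows "smooth_on S e0_part"
proof -
  have "linear (\<lambda>c::complex. axis None c :: 'n::finite cvec)"
    by (rule linearI) (auto simp: vec_eq_iff axis_def)
  then have "bounded_linear (\<lambda>c::complex. axis None c :: 'n::finite cvec)"
    using linear_conv_bounded_linear by blast
  from smooth_on_linear[OF assms this smooth_on_vec_nth(1)[OF assms]] show ?thesis
    by (simp add: e0_part_def[abs_def])
qed

lemma smooth_on_null_segment: "smooth_on (cone_nbhd \<times> UNIV) (null_segment :: 'n::finite cvec \<times> real \<Rightarrow> 'n cvec)"
proof -
  have W: "open (cone_nbhd \<times> (UNIV :: real set))"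
    by (simp add: open_Times open_cone_nbhd)
  have fst: "smooth_on (cone_nbhd \<times> UNIV) (\<lambda>p :: 'n cvec \<times> real. fst p)"
    by (rule smooth_on_linear[OF W bounded_linear_fst smooth_on_id[OF W]])
  have snd: "smooth_on (cone_nbhd \<times> UNIV) (\<lambda>p :: 'n cvec \<times> real. snd p)"
    by (rule smooth_on_linear[OF W bounded_linear_snd smooth_on_id[OF W]])
  have img: "fst ` (cone_nbhd \<times> (UNIV :: real set)) \<subseteq> cone_nbhd"
    by auto
  have "smooth_on (cone_nbhd \<times> UNIV) (\<lambda>p :: 'n cvec \<times> real. null_scale (fst p))"
    by (rule smooth_on_compose[OF W open_cone_nbhd img fst smooth_on_null_scale])
  moreover have "smooth_on (cone_nbhd \<times> UNIV) (\<lambda>p :: 'n cvec \<times> real. e0_part (fst p))"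
    by (rule smooth_on_compose[OF W open_cone_nbhd img fst smooth_on_e0_part[OF open_cone_nbhd]])
  ultimately show ?thesis
    unfolding null_segment_def[abs_def]
    by (intro smooth_on_add[OF W] smooth_on_scaleR[OF W] smooth_on_diff[OF W] smooth_on_mult[OF W]
        fst snd smooth_on_const[OF W])
qed

lemma null_segment_nonzero:
  assumes "z \<in> cone_nbhd"
  shows "null_segment (z, u) \<noteq> 0"
proof -
  obtain j where j: "z $ Some j \<noteq> 0"
    using assms rho1_pos_iff[of z] by (auto simp: cone_nbhd_def)
  have "null_segment (z, u) $ Some j = z $ Some j"
    by (simp add: null_segment_def e0_part_def axis_def)
  with j show ?thesis
    by (metis zero_index)
qed

lemma null_segment_start:
  assumes z: "z \<in> cone_nbhd"
  shows "null_segment (z, 0) \<in> nullcone"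
proof -
  let ?y = "null_segment (z, 0)"
  have "?y $ None = null_scale z *\<^sub>R z $ None" "?y $ Some j = z $ Some j" for j
    by (simp_all add: null_segment_def e0_part_def axis_def algebra_simps)
  then have "rho0 ?y = (null_scale z)\<^sup>2 * rho0 z" "rho1 ?y = rho1 z"
    by (simp_all add: rho0_def rho1_def power_mult_distrib)
  moreover have "(null_scale z)\<^sup>2 * rho0 z = rho1 z"
    using z rho_nonneg[of z] by (simp add: cone_nbhd_def null_scale_def)
  ultimately have "rho0 ?y = rho1 ?y"
    by simp
  then show ?thesis
    using null_segment_nonzero[OF z] by (simp add: nullcone_def Lform_eq_rho)
qed

lemma smooth_on_segment_derivative:
  fixes h :: "'n::finite cvec \<Rightarrow> complex"
  assumes h: "smooth_on punct h"
  shows "smooth_on (cone_nbhd \<times> UNIV) (segment_derivative h)"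
proof -
  have W: "open (cone_nbhd \<times> (UNIV :: real set))"
    by (simp add: open_Times open_cone_nbhd)
  have img: "null_segment ` (cone_nbhd \<times> UNIV) \<subseteq> punct"
    by (auto simp: null_segment_nonzero)
  have bl: "bounded_linear (\<lambda>p :: 'n cvec \<times> real. fst p $ None)"
    by (rule bounded_linear_compose[OF bounded_linear_vec_nth bounded_linear_fst])
  have "smooth_on (cone_nbhd \<times> UNIV) (\<lambda>p :: 'n cvec \<times> real. fst p $ None)"
    by (rule smooth_on_linear[OF W bl smooth_on_id[OF W]])
  moreover have "smooth_on (cone_nbhd \<times> UNIV) (\<lambda>p :: 'n cvec \<times> real. cnj (fst p $ None))"
    by (rule smooth_on_linear[OF W bounded_linear_compose[OF bounded_linear_cnj bl] smooth_on_id[OF W]])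
  moreover have "smooth_on (cone_nbhd \<times> UNIV) (\<lambda>p. dz None h (null_segment p))"
    by (rule smooth_on_compose[OF W open_punct img smooth_on_null_segment smooth_on_dz[OF open_punct h]])
  moreover have "smooth_on (cone_nbhd \<times> UNIV) (\<lambda>p. dzbar None h (null_segment p))"
    by (rule smooth_on_compose[OF W open_punct img smooth_on_null_segment smooth_on_dzbar[OF open_punct h]])
  ultimately have "smooth_on (cone_nbhd \<times> UNIV)
      (\<lambda>p. fst p $ None * dz None h (null_segment p) + cnj (fst p $ None) * dzbar None h (null_segment p))"
    by (intro smooth_on_add[OF W] smooth_on_mult[OF W])
  then show ?thesis
  proof (rule smooth_on_transform_within_open[OF W])
    fix p :: "'n cvec \<times> real"
    assume "p \<in> cone_nbhd \<times> UNIV"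
    then have "null_segment p \<in> punct"
      using img by blast
    then show "fst p $ None * dz None h (null_segment p) + cnj (fst p $ None) * dzbar None h (null_segment p)
        = segment_derivative h p"
      unfolding segment_derivative_def e0_part_def
      using derivative_axis_eq_Wirtinger[OF smooth_on_has_derivative[OF open_punct h]] by simp
  qed
qed

lemma smooth_on_null_quotient:
  assumes "smooth_on punct h"
  shows "smooth_on cone_nbhd (null_quotient h)"
proof -
  have "rho0 z * (1 + null_scale z) \<noteq> 0" if "z \<in> cone_nbhd" for z
    using that null_scale_nonneg[of z] by (simp add: cone_nbhd_def add_nonneg_eq_0_iff)
  then have "smooth_on cone_nbhd (\<lambda>z. inverse (rho0 z * (1 + null_scale z)))"
    by (intro smooth_on_inverse smooth_on_mult smooth_on_add open_cone_nbhd smooth_on_rho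
        smooth_on_const smooth_on_null_scale)
  then show ?thesis
    unfolding null_quotient_def[abs_def]
    by (intro smooth_on_mult[OF open_cone_nbhd] smooth_on_linear[OF open_cone_nbhd bounded_linear_of_real]
        smooth_on_integral_param[OF open_cone_nbhd smooth_on_segment_derivative[OF assms]])
qed

lemma vanishing_on_nullcone_eq_integral:
  fixes h :: "'n::finite cvec \<Rightarrow> complex"
  assumes h: "smooth_on punct h" "\<forall>z\<in>nullcone. h z = 0" and z: "z \<in> cone_nbhd"
  shows "h z = (1 - null_scale z) *\<^sub>R integral {0..1} (\<lambda>u. segment_derivative h (z, u))"
proof -
  let ?a = "z + (null_scale z - 1) *\<^sub>R e0_part z" and ?b = "(1 - null_scale z) *\<^sub>R e0_part z"
  define \<phi> where "\<phi> u = h (null_segment (z, u))" for u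
  have line: "null_segment (z, u) = ?a + u *\<^sub>R ?b" for u
    by (simp add: null_segment_def algebra_simps)
  have "(\<phi> has_vector_derivative (1 - null_scale z) *\<^sub>R segment_derivative h (z, u)) (at u within {0..1})" for u
  proof -
    have dl: "((\<lambda>u. ?a + u *\<^sub>R ?b) has_derivative (\<lambda>t. t *\<^sub>R ?b)) (at u within {0..1})"
      by (auto intro!: derivative_eq_intros)
    have dh: "(h has_derivative frechet_derivative h (at (null_segment (z, u)))) (at (?a + u *\<^sub>R ?b))"
      using smooth_on_has_derivative[OF open_punct h(1)] null_segment_nonzero[OF z] by (simp add: line)
    have "\<phi> = (\<lambda>u. h (?a + u *\<^sub>R ?b))"
      by (simp add: fun_eq_iff \<phi>_def line)
    then have "(\<phi> has_derivative (\<lambda>t. frechet_derivative h (at (null_segment (z, u))) (t *\<^sub>R ?b)))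
        (at u within {0..1})"
      using has_derivative_compose[OF dl dh] by simp
    then show ?thesis
      unfolding has_vector_derivative_def
      by (simp add: linear_scale[OF has_derivative_linear[OF dh]] segment_derivative_def)
  qed
  then have ftc: "((\<lambda>u. (1 - null_scale z) *\<^sub>R segment_derivative h (z, u)) has_integral (\<phi> 1 - \<phi> 0)) {0..1}"
    by (intro fundamental_theorem_of_calculus) auto
  have "continuous_on {0..1} (\<lambda>u. segment_derivative h (z, u))"
    by (rule continuous_on_compose2[OF smooth_on_imp_continuous_on[OF smooth_on_segment_derivative[OF h(1)]]])
      (use z in \<open>auto intro!: continuous_intros\<close>)
  then have "((\<lambda>u. segment_derivative h (z, u)) has_integral integral {0..1} (\<lambda>u. segment_derivative h (z, u))) {0..1}"
    by (intro integrable_integral integrable_continuous_interval)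
  from has_integral_unique[OF ftc has_integral_cmul[OF this, of "1 - null_scale z"]]
  show ?thesis
    using h(2) null_segment_start[OF z] by (simp add: \<phi>_def null_segment_def)
qed

lemma vanishing_on_nullcone_eq_Lc_mult:
  fixes h :: "'n::finite cvec \<Rightarrow> complex"
  assumes h: "smooth_on punct h" "\<forall>z\<in>nullcone. h z = 0" and z: "z \<in> cone_nbhd"
  shows "h z = Lc z * null_quotient h z"
proof -
  have pos: "rho0 z * (1 + null_scale z) > 0"
    using z null_scale_nonneg[of z] by (simp add: cone_nbhd_def add_pos_nonneg)
  have "rho0 z * (null_scale z)\<^sup>2 = rho1 z"
    using z rho_nonneg[of z] by (simp add: cone_nbhd_def null_scale_def)
  then have "(1 - null_scale z) * (rho0 z * (1 + null_scale z)) = Lform z"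
    by (simp add: Lform_eq_rho algebra_simps power2_eq_square)
  then have "1 - null_scale z = Lform z * inverse (rho0 z * (1 + null_scale z))"
    using pos by (simp add: field_simps)
  then show ?thesis
    using vanishing_on_nullcone_eq_integral[OF h z]
    by (simp add: scaleR_conv_of_real Lc_def null_quotient_def)
qed

lemma Lform_pos_along_e0_part:
  assumes "z \<in> nullcone" "t > 0"
  shows "0 < Lform (z + t *\<^sub>R e0_part z)"
proof -
  have "rho0 z = rho1 z" "0 < rho0 z"
    using assms(1) nullcone_subset_cone_nbhd by (auto simp: nullcone_def Lform_eq_rho cone_nbhd_def)
  moreover have N: "(z + t *\<^sub>R e0_part z) $ None = (1 + t) *\<^sub>R z $ None"
    and S: "(z + t *\<^sub>R e0_part z) $ Some j = z $ Some j" for j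
    by (simp_all add: e0_part_def axis_def algebra_simps)
  have "rho0 (z + t *\<^sub>R e0_part z) = (1 + t)\<^sup>2 * rho0 z" "rho1 (z + t *\<^sub>R e0_part z) = rho1 z"
    unfolding rho0_def rho1_def N S by (simp_all add: power_mult_distrib)
  moreover have "1 < (1 + t)\<^sup>2"
    using assms(2) by (simp add: power2_eq_square algebra_simps add_pos_pos)
  ultimately show ?thesis
    by (simp add: Lform_eq_rho)
qed

text \<open>Every point \<open>z\<close> of the null cone is the limit of the points \<open>z + t *\<^sub>R e0_part z\<close>, \<open>t > 0\<close>,
  which lie off it.\<close>

lemma bihom_by_continuity:
  fixes g :: "'n::finite cvec \<Rightarrow> complex"
  assumes cont: "continuous_on punct g"
    and off: "\<And>z c. z \<noteq> 0 \<Longrightarrow> c \<noteq> 0 \<Longrightarrow> Lform z \<noteq> 0 \<Longrightarrow> g (c *s z) = c powi p * cnj c powi q * g z"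
  shows "bihom p q g"
  unfolding bihom_def
proof (intro allI impI)
  fix z :: "'n cvec" and c :: complex
  let ?K = "c powi p * cnj c powi q"
  assume zc: "z \<noteq> 0 \<and> c \<noteq> 0"
  show "g (c *s z) = ?K * g z"
  proof (cases "Lform z = 0")
    case False
    then show ?thesis using off zc by blast
  next
    case True
    then have z: "z \<in> nullcone"
      using zc by (simp add: nullcone_def)
    define x where "x t = z + t *\<^sub>R e0_part z" for t :: real
    have L0: "Lform (0 :: 'n cvec) = 0"
      by (simp add: Lform_def)
    have pos: "0 < Lform (x t)" if "t > 0" for t
      using Lform_pos_along_e0_part[OF z that] by (simp add: x_def)
    have "Lform (x t) \<noteq> 0" "x t \<noteq> 0" if "t > 0" for t
      using pos[OF that] L0 by auto
    then have ev: "eventually (\<lambda>t. g (c *s x t) = ?K * g (x t)) (at_right 0)"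
      unfolding eventually_at_right_field using off zc by (intro exI[of _ 1]) auto
    have x0: "x 0 = z"
      by (simp add: x_def)
    have "isCont x 0"
      unfolding x_def by (intro continuous_intros)
    moreover have "isCont g z" "isCont g (c *s z)"
      using cont zc unfolding continuous_on_eq_continuous_at[OF open_punct] by simp_all
    moreover have "isCont (\<lambda>v::'n cvec. c *s v) (x 0)"
      by (rule linear_continuous_at[OF bounded_linear_vector_smult_left])
    ultimately have "isCont (\<lambda>t. g (c *s x t)) 0" "isCont (\<lambda>t. g (x t)) 0"
      using isCont_o2 x0 by metis+
    then have "((\<lambda>t. g (c *s x t)) \<longlongrightarrow> g (c *s z)) (at_right 0)"
      "((\<lambda>t. ?K * g (x t)) \<longlongrightarrow> ?K * g z) (at_right 0)"
      using x0 by (auto simp: isCont_def filterlim_at_split intro!: tendsto_mult)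
    with tendsto_cong[OF ev] show ?thesis
      using tendsto_unique[OF trivial_limit_at_right_real] by blast
  qed
qed

definition Lc_quotient :: "('n::finite cvec \<Rightarrow> complex) \<Rightarrow> 'n cvec \<Rightarrow> complex" where
  "Lc_quotient h z = (if Lform z = 0 then null_quotient h z else h z / Lc z)"

lemma Lc_mult_Lc_quotient:
  assumes "\<forall>z\<in>nullcone. h z = 0" "z \<noteq> 0"
  shows "h z = Lc z * Lc_quotient h z"
  using assms by (simp add: Lc_quotient_def Lc_def nullcone_def)

lemma smooth_on_Lc_quotient:
  fixes h :: "'n::finite cvec \<Rightarrow> complex"
  assumes h: "smooth_on punct h" "\<forall>z\<in>nullcone. h z = 0"
  shows "smooth_on punct (Lc_quotient h)"
proof (rule smooth_on_local[OF open_punct])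
  fix x :: "'n cvec"
  assume x: "x \<in> punct"
  show "\<exists>U. open U \<and> x \<in> U \<and> U \<subseteq> punct \<and> smooth_on U (Lc_quotient h)"
  proof (cases "Lform x = 0")
    case True
    have "Lc_quotient h y = null_quotient h y" if "y \<in> cone_nbhd" for y
      using vanishing_on_nullcone_eq_Lc_mult[OF h that] by (simp add: Lc_quotient_def Lc_def)
    then have "smooth_on cone_nbhd (Lc_quotient h)"
      by (intro smooth_on_transform_within_open[OF open_cone_nbhd smooth_on_null_quotient[OF h(1)]]) simp
    moreover have "x \<in> cone_nbhd"
      using True x nullcone_subset_cone_nbhd by (auto simp: nullcone_def)
    ultimately show ?thesis
      using open_cone_nbhd cone_nbhd_subset_punct by blast
  next
    case False
    define V :: "'n cvec set" where "V = punct \<inter> {x. Lc x \<noteq> 0}"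
    have V: "open V"
      unfolding V_def using smooth_on_imp_continuous_on[OF smooth_on_Lc[OF open_UNIV]]
      by (intro open_Int open_punct open_Collect_neq continuous_on_const)
    have "smooth_on V (\<lambda>x. h x * inverse (Lc x))"
      by (intro smooth_on_mult[OF V] smooth_on_inverse[OF V] smooth_on_Lc[OF V] smooth_on_subset[OF h(1)])
        (auto simp: V_def)
    then have "smooth_on V (Lc_quotient h)"
      by (rule smooth_on_transform_within_open[OF V]) (auto simp: V_def Lc_quotient_def Lc_def divide_inverse)
    then show ?thesis
      using False x V by (intro exI[of _ V]) (auto simp: V_def Lc_def)
  qed
qed

lemma bihom_Lc_quotient:
  fixes h :: "'n::finite cvec \<Rightarrow> complex"
  assumes h: "smooth_on punct h" "bihom p p h" "\<forall>z\<in>nullcone. h z = 0"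
  shows "bihom (p - 1) (p - 1) (Lc_quotient h)"
proof (rule bihom_by_continuity)
  show "continuous_on punct (Lc_quotient h)"
    by (rule smooth_on_imp_continuous_on[OF smooth_on_Lc_quotient[OF h(1,3)]])
next
  fix z :: "'n cvec" and c :: complex
  assume z: "z \<noteq> 0" and c: "c \<noteq> 0" and L: "Lform z \<noteq> 0"
  then have Lz: "Lc z \<noteq> 0" and Lcz: "Lform (c *s z) \<noteq> 0"
    by (simp_all add: Lc_def Lform_vector_smult)
  then have "Lc_quotient h (c *s z) = h (c *s z) / Lc (c *s z)"
    by (simp add: Lc_quotient_def)
  also have "\<dots> = (c powi p * cnj c powi p * h z) / (c * cnj c * Lc z)"
    using h(2) z c by (simp add: bihom_def Lc_vector_smult)
  also have "\<dots> = c powi (p - 1) * cnj c powi (p - 1) * (h z / Lc z)"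
    using c Lz by (simp add: power_int_diff field_simps)
  also have "\<dots> = c powi (p - 1) * cnj c powi (p - 1) * Lc_quotient h z"
    using L by (simp add: Lc_quotient_def)
  finally show "Lc_quotient h (c *s z) = c powi (p - 1) * cnj c powi (p - 1) * Lc_quotient h z" .
qed

section \<open>Improving the extension order by order\<close>

lemma Lap_of_real_Re:
  fixes F :: "'n::finite cvec \<Rightarrow> real"
  assumes "smooth_on punct F" "z \<noteq> 0" "Lap (\<lambda>x. complex_of_real (F x)) z = Lc z ^ m * c"
  shows "Lap (\<lambda>x. complex_of_real (F x)) z = Lc z ^ m * complex_of_real (Re c)"
proof -
  have "Lap (\<lambda>x. complex_of_real (F x)) z = complex_of_real (Re (Lap (\<lambda>x. complex_of_real (F x)) z))"
    using Im_Lap_of_real[OF open_punct assms(1)] assms(2) by (simp add: complex_eq_iff)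
  then show ?thesis
    using assms(3) by (simp add: Lc_power)
qed

lemma Lap_add_Lc_power_mult:
  fixes G g :: "'n::finite cvec \<Rightarrow> complex"
  assumes "smooth_on punct G" "smooth_on punct g" "bihom (- int (Suc m)) (- int (Suc m)) g" "z \<noteq> 0"
  shows "Lap (\<lambda>x. G x + Lc x ^ Suc m * g x) z
    = Lap G z + Lc z ^ Suc m * Lap g z + of_nat (Suc m) * (of_nat CARD('n) - of_nat (Suc m)) * Lc z ^ m * g z"
proof -
  have "smooth_on punct (\<lambda>x. Lc x ^ Suc m * g x)"
    by (intro smooth_on_mult[OF open_punct] smooth_on_power[OF open_punct] smooth_on_Lc[OF open_punct] assms(2))
  then have "Lap (\<lambda>x. G x + Lc x ^ Suc m * g x) z = Lap G z + Lap (\<lambda>x. Lc x ^ Suc m * g x) z"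
    using Lap_add[OF open_punct _ assms(1)] assms(4) by simp
  then show ?thesis
    using Lap_Lc_power_mult[OF assms(2-4)] by simp
qed

text \<open>Keeping \<open>F - G0\<close> divisible by \<open>L\<close> makes \<open>\<Delta>\<^sup>n F = \<Delta>\<^sup>n G0\<close> on the null cone; this is where
  the hypothesis \<open>Q(f) = 0\<close> enters, at the critical order \<open>j + 1 = n\<close>.\<close>

definition approx_ext :: "('n::finite cvec \<Rightarrow> real) \<Rightarrow> ('n cvec \<Rightarrow> complex) \<Rightarrow> nat \<Rightarrow> bool" where
  "approx_ext f G0 j \<longleftrightarrow> (\<exists>F w h. hom_ext f F \<and> smooth_on punct w \<and> bihom (-1) (-1) w
     \<and> (\<forall>z\<in>punct. complex_of_real (F z) = G0 z + Lc z * w z)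
     \<and> smooth_on punct h \<and> bihom (- int (Suc j)) (- int (Suc j)) h
     \<and> (\<forall>z\<in>punct. Lap (\<lambda>x. complex_of_real (F x)) z = Lc z ^ j * h z))"

lemma approx_ext_0:
  assumes "hom_ext f F0"
  shows "approx_ext f (\<lambda>z. complex_of_real (F0 z)) 0"
proof -
  let ?G = "\<lambda>z. complex_of_real (F0 z)"
  have "smooth_on punct ?G" "bihom 0 0 ?G"
    using assms smooth_on_linear[OF open_punct bounded_linear_of_real]
    by (auto simp: hom_ext_def hom00_iff_bihom)
  then have "smooth_on punct (Lap ?G)" "bihom (- int (Suc 0)) (- int (Suc 0)) (Lap ?G)"
    using smooth_on_Lap[OF open_punct] bihom_Lap by fastforce+
  then show ?thesis
    unfolding approx_ext_def using assms smooth_on_const[OF open_punct] bihom_zero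
    by (intro exI[of _ F0] exI[of _ "\<lambda>x. 0"] exI[of _ "Lap ?G"]) auto
qed

lemma hom_ext_add_Lform_power_mult:
  assumes F: "hom_ext f F" and g: "smooth_on punct g"
    and hg: "bihom (- int (Suc m)) (- int (Suc m)) (\<lambda>x. complex_of_real (g x))"
  shows "hom_ext f (\<lambda>x. F x + Lform x ^ Suc m * g x)"
proof -
  have "smooth_on punct (\<lambda>x. F x + Lform x ^ Suc m * g x)"
    using F by (intro smooth_on_add[OF open_punct] smooth_on_mult[OF open_punct] smooth_on_power[OF open_punct]
        smooth_on_Lform open_punct g) (simp add: hom_ext_def)
  moreover have "bihom 0 0 (\<lambda>x. complex_of_real (F x) + Lc x ^ Suc m * complex_of_real (g x))"
    using bihom_add[OF _ bihom_mult[OF bihom_Lc_power[of "Suc m"] hg]] F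
    by (simp add: hom_ext_def hom00_iff_bihom)
  ultimately show ?thesis
    using F by (simp add: hom_ext_def hom00_iff_bihom nullcone_def Lc_def)
qed

lemma Lap_Lform_power_mult_correction:
  fixes F g :: "'n::finite cvec \<Rightarrow> real"
  assumes sF: "smooth_on punct F" and sg: "smooth_on punct g"
    and hg: "bihom (- int (Suc m)) (- int (Suc m)) (\<lambda>x. complex_of_real (g x))" and z: "z \<noteq> 0"
    and LF: "Lap (\<lambda>x. complex_of_real (F x)) z = Lc z ^ m * c"
    and gz: "real (Suc m) * (real CARD('n) - real (Suc m)) * g z = - Re c"
  shows "Lap (\<lambda>x. complex_of_real (F x + Lform x ^ Suc m * g x)) z
    = Lc z ^ Suc m * Lap (\<lambda>x. complex_of_real (g x)) z"
proof -
  let ?gc = "\<lambda>x. complex_of_real (g x)" and ?k = "real (Suc m) * (real CARD('n) - real (Suc m))"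
  have sgc: "smooth_on punct ?gc"
    by (rule smooth_on_linear[OF open_punct bounded_linear_of_real sg])
  have "(\<lambda>x. complex_of_real (F x + Lform x ^ Suc m * g x))
      = (\<lambda>x. complex_of_real (F x) + Lc x ^ Suc m * ?gc x)"
    by (simp add: Lc_def)
  then have "Lap (\<lambda>x. complex_of_real (F x + Lform x ^ Suc m * g x)) z
      = Lap (\<lambda>x. complex_of_real (F x)) z + Lc z ^ Suc m * Lap ?gc z + complex_of_real ?k * Lc z ^ m * ?gc z"
    using Lap_add_Lc_power_mult[OF smooth_on_linear[OF open_punct bounded_linear_of_real sF] sgc hg z]
    by simp
  also have "\<dots> = Lc z ^ m * (complex_of_real (Re c) + complex_of_real (?k * g z)) + Lc z ^ Suc m * Lap ?gc z"
    using Lap_of_real_Re[OF sF z LF] by (simp add: algebra_simps)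
  also have "complex_of_real (Re c) + complex_of_real (?k * g z) = 0"
    using gz by (metis add.right_inverse of_real_0 of_real_add)
  finally show ?thesis
    by simp
qed

lemma approx_ext_Suc_noncritical:
  fixes f :: "'n::finite cvec \<Rightarrow> real"
  assumes P: "approx_ext f G0 m" and ne: "Suc m \<noteq> CARD('n)"
  shows "approx_ext f G0 (Suc m)"
proof -
  obtain F w h where F: "hom_ext f F" and w: "smooth_on punct w" "bihom (-1) (-1) w"
    and Fw: "\<forall>z\<in>punct. complex_of_real (F z) = G0 z + Lc z * w z"
    and h: "smooth_on punct h" "bihom (- int (Suc m)) (- int (Suc m)) h"
    and LF: "\<forall>z\<in>punct. Lap (\<lambda>x. complex_of_real (F x)) z = Lc z ^ m * h z"
    using P unfolding approx_ext_def by blast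
  define k where "k = real (Suc m) * (real CARD('n) - real (Suc m))"
  define g where "g x = - Re (h x) / k" for x
  define F' where "F' x = F x + Lform x ^ Suc m * g x" for x
  have k: "k \<noteq> 0"
    using ne by (simp add: k_def)
  have sF: "smooth_on punct F"
    using F by (simp add: hom_ext_def)
  have sg: "smooth_on punct g"
    unfolding g_def[abs_def] divide_inverse
    by (intro smooth_on_mult[OF open_punct] smooth_on_minus[OF open_punct] smooth_on_const[OF open_punct]
        smooth_on_linear[OF open_punct bounded_linear_Re h(1)])
  then have sgc: "smooth_on punct (\<lambda>x. complex_of_real (g x))"
    by (rule smooth_on_linear[OF open_punct bounded_linear_of_real])
  have hg: "bihom (- int (Suc m)) (- int (Suc m)) (\<lambda>x. complex_of_real (g x))"
    using bihom_cmult[OF bihom_Re[OF h(2)], of "complex_of_real (- 1 / k)"] by (simp add: g_def)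
  have F'c: "complex_of_real (F' x) = complex_of_real (F x) + Lc x ^ Suc m * complex_of_real (g x)" for x
    by (simp add: F'_def Lc_def)
  have "hom_ext f F'"
    unfolding F'_def[abs_def] by (rule hom_ext_add_Lform_power_mult[OF F sg hg])
  moreover have "smooth_on punct (\<lambda>x. w x + Lc x ^ m * complex_of_real (g x))"
    by (intro smooth_on_add[OF open_punct] w(1) smooth_on_mult[OF open_punct] smooth_on_power[OF open_punct]
        smooth_on_Lc[OF open_punct] sgc)
  moreover have "bihom (-1) (-1) (\<lambda>x. w x + Lc x ^ m * complex_of_real (g x))"
  proof -
    have "bihom (-1) (-1) (\<lambda>x. Lc x ^ m * complex_of_real (g x))"
      using bihom_mult[OF bihom_Lc_power[of m] hg] by simp
    then show ?thesis
      by (rule bihom_add[OF w(2)])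
  qed
  moreover have "\<forall>z\<in>punct. complex_of_real (F' z) = G0 z + Lc z * (w z + Lc z ^ m * complex_of_real (g z))"
    using Fw by (simp add: F'c algebra_simps)
  moreover have "smooth_on punct (Lap (\<lambda>x. complex_of_real (g x)))"
    by (rule smooth_on_Lap[OF open_punct sgc])
  moreover have "bihom (- int (Suc (Suc m))) (- int (Suc (Suc m))) (Lap (\<lambda>x. complex_of_real (g x)))"
    using bihom_Lap[OF sgc hg] by (simp add: algebra_simps)
  moreover have "Lap (\<lambda>x. complex_of_real (F' x)) z = Lc z ^ Suc m * Lap (\<lambda>x. complex_of_real (g x)) z"
    if "z \<in> punct" for z
    unfolding F'_def using that k LF
    by (intro Lap_Lform_power_mult_correction[OF sF sg hg]) (simp_all add: k_def g_def)
  ultimately show ?thesis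
    unfolding approx_ext_def by blast
qed

lemma funpow_Lap_Lc_mult_nullcone:
  fixes w :: "'n::finite cvec \<Rightarrow> complex"
  assumes "smooth_on punct w" "bihom (-1) (-1) w" "z \<in> nullcone"
  shows "(Lap ^^ CARD('n)) (\<lambda>x. Lc x * w x) z = 0"
proof -
  obtain m where m: "CARD('n) = Suc m"
    using not0_implies_Suc[of "CARD('n)"] by auto
  have "z \<noteq> 0" "Lc z = 0"
    using assms(3) by (auto simp: nullcone_def Lc_def)
  with funpow_Lap_Lc_mult[OF assms(1,2), of z m] m show ?thesis
    by simp
qed

lemma vanishing_on_nullcone_if_funpow_Lap:
  fixes h :: "'n::finite cvec \<Rightarrow> complex"
  assumes h: "smooth_on punct h" "bihom (- int CARD('n)) (- int CARD('n)) h"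
    and m: "Suc m = CARD('n)" and z: "z \<in> nullcone"
    and "(Lap ^^ m) (\<lambda>x. Lc x ^ m * h x) z = 0"
  shows "h z = 0"
proof -
  have "of_nat t * (of_nat t - of_nat CARD('n) :: complex) \<noteq> 0" if "t \<in> {1..m}" for t
    using that m by auto
  then have "(\<Prod>t\<in>{1..m}. of_nat t * (of_nat t - of_nat CARD('n) :: complex)) \<noteq> 0"
    by (simp add: prod_zero_iff)
  then show ?thesis
    using funpow_Lap_Lc_power_mult_nullcone[OF h z, of m] assms(5) by simp
qed

lemma approx_ext_Suc_critical:
  fixes f :: "'n::finite cvec \<Rightarrow> real"
  assumes P: "approx_ext f G0 m" and m: "Suc m = CARD('n)"
    and G0: "smooth_on punct G0" and Q: "\<forall>z\<in>nullcone. (Lap ^^ CARD('n)) G0 z = 0"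
  shows "approx_ext f G0 (Suc m)"
proof -
  obtain F w h where F: "hom_ext f F" and w: "smooth_on punct w" "bihom (-1) (-1) w"
    and Fw: "\<forall>z\<in>punct. complex_of_real (F z) = G0 z + Lc z * w z"
    and h: "smooth_on punct h" "bihom (- int (Suc m)) (- int (Suc m)) h"
    and LF: "\<forall>z\<in>punct. Lap (\<lambda>x. complex_of_real (F x)) z = Lc z ^ m * h z"
    using P unfolding approx_ext_def by blast
  let ?Fc = "\<lambda>x. complex_of_real (F x)"
  have sFc: "smooth_on punct ?Fc"
    by (rule smooth_on_linear[OF open_punct bounded_linear_of_real]) (use F in \<open>simp add: hom_ext_def\<close>)
  have "h z = 0" if z: "z \<in> nullcone" for z
  proof (rule vanishing_on_nullcone_if_funpow_Lap[OF h(1) _ m z])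
    show "bihom (- int CARD('n)) (- int CARD('n)) h"
      using h(2) m by simp
    have z0: "z \<noteq> 0"
      using z by (simp add: nullcone_def)
    have "smooth_on punct (\<lambda>x. Lc x ^ m * h x)"
      by (intro smooth_on_mult[OF open_punct] smooth_on_power[OF open_punct] smooth_on_Lc[OF open_punct] h(1))
    moreover have "Lap ?Fc x = Lc x ^ m * h x" if "x \<noteq> 0" for x
      using LF that by simp
    ultimately have "(Lap ^^ m) (Lap ?Fc) z = (Lap ^^ m) (\<lambda>x. Lc x ^ m * h x) z"
      using funpow_Lap_transform_within_punct[OF smooth_on_Lap[OF open_punct sFc] _ _ z0] by blast
    then have "(Lap ^^ m) (\<lambda>x. Lc x ^ m * h x) z = (Lap ^^ CARD('n)) ?Fc z"
      by (simp add: m[symmetric] funpow_Suc_right del: funpow.simps)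
    also have "\<dots> = (Lap ^^ CARD('n)) (\<lambda>x. G0 x + Lc x * w x) z"
      using funpow_Lap_transform_within_punct[OF sFc smooth_on_add[OF open_punct G0 smooth_on_Lc_mult[OF w(1)]] _ z0]
        Fw by simp
    also have "\<dots> = 0"
      using funpow_Lap_add[OF G0 smooth_on_Lc_mult[OF w(1)] z0] Q z funpow_Lap_Lc_mult_nullcone[OF w z]
      by simp
    finally show "(Lap ^^ m) (\<lambda>x. Lc x ^ m * h x) z = 0" .
  qed
  then have "smooth_on punct (Lc_quotient h)" "bihom (- int (Suc (Suc m))) (- int (Suc (Suc m))) (Lc_quotient h)"
    and "\<forall>z\<in>punct. Lap ?Fc z = Lc z ^ Suc m * Lc_quotient h z"
    using smooth_on_Lc_quotient[OF h(1)] bihom_Lc_quotient[OF h] LF Lc_mult_Lc_quotient[of h]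
    by (auto simp: algebra_simps)
  then show ?thesis
    unfolding approx_ext_def using F w Fw by blast
qed

lemma approx_ext_all:
  fixes f :: "'n::finite cvec \<Rightarrow> real"
  assumes F0: "hom_ext f F0" and Q: "\<forall>z\<in>nullcone. (Lap ^^ CARD('n)) (\<lambda>x. complex_of_real (F0 x)) z = 0"
  shows "approx_ext f (\<lambda>x. complex_of_real (F0 x)) m"
proof (induction m)
  case 0
  show ?case
    using approx_ext_0[OF F0] .
next
  case (Suc m)
  have "smooth_on punct (\<lambda>x. complex_of_real (F0 x))"
    by (rule smooth_on_linear[OF open_punct bounded_linear_of_real]) (use F0 in \<open>simp add: hom_ext_def\<close>)
  then show ?case
    using approx_ext_Suc_critical[OF Suc.IH _ _ Q] approx_ext_Suc_noncritical[OF Suc.IH] by blast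
qed

theorem mainTheorem4:
  fixes f :: "'n::finite cvec \<Rightarrow> real" and k :: nat
  assumes "CARD('n) \<ge> 2"
    and "f \<in> Eclass"
    and "\<forall>\<zeta>\<in>nullcone. Qop f \<zeta> = 0"
    and "k \<ge> 1"
  shows "\<exists>F :: 'n cvec \<Rightarrow> real. smooth_on punct F \<and> hom00 F \<and> (\<forall>\<zeta>\<in>nullcone. F \<zeta> = f \<zeta>)
           \<and> bigO_L k (Lap (\<lambda>z. complex_of_real (F z)))"
proof -
  define F0 where "F0 = (SOME F. hom_ext f F)"
  have F0: "hom_ext f F0"
    unfolding F0_def using someI_ex[OF hom_ext_exists[OF assms(2)]] .
  have "\<forall>z\<in>nullcone. (Lap ^^ CARD('n)) (\<lambda>x. complex_of_real (F0 x)) z = 0"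
    using assms(3) by (simp add: Qop_def F0_def)
  then obtain F h where F: "hom_ext f F" and h: "smooth_on punct h"
    and LF: "\<forall>z\<in>punct. Lap (\<lambda>x. complex_of_real (F x)) z = Lc z ^ k * h z"
    using approx_ext_all[OF F0, of k] unfolding approx_ext_def by blast
  then have "bigO_L k (Lap (\<lambda>z. complex_of_real (F z)))"
    unfolding bigO_L_def by (auto simp: Lc_power)
  then show ?thesis
    using F by (auto simp: hom_ext_def)
qed

end
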